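(* For all real $z\geq 10^9$, \[ \Biggl| S_1(z) - \log z - \gamma - \sum_p \frac{\log p}{p(p-1)} \Biggr| \leq \frac{58}{\sqrt{z}}, \qquad\text{where } S_1(z)=\sum_{n\le z}\frac{\mu(n)^2}{\varphi(n)}, \] the sum over $p$ runs over all primes, and $\gamma=0.5772156\ldots$ is the Euler–Mascheroni constant.
   Context: $\mu$ is the Möbius function and $\varphi$ Euler's totient function. *)

theory Defs
  imports "HOL-Analysis.Analysis" "HOL-Number_Theory.Number_Theory"
    "HOL-Computational_Algebra.Squarefree"
begin

definition moebius_mu :: "nat \<Rightarrow> real" where
  "moebius_mu n = (if n = 0 \<or> \<not> squarefree n then 0 else (-1) ^ card (prime_factors n))"

definition S1 :: "real \<Rightarrow> real" where
  "S1 z = (\<Sum>n\<in>{1..nat \<lfloor>z\<rfloor>}. (moebius_mu n)^2 / real (totient n))"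

end

theory Submission
  imports Defs
begin

text \<open>
  Let \<open>h\<close> be the multiplicative function with \<open>h(p) = -h(p\<^sup>2) = 1/(p(p-1))\<close> and
  \<open>h(p\<^sup>k) = 0\<close> for \<open>k \<ge> 3\<close>, so that \<open>\<mu>(n)\<^sup>2 n/\<phi>(n) = \<Sum>\<^sub>d\<^sub>|\<^sub>n h(d) d\<close>. Then
  \<open>S\<^sub>1(z) = \<Sum>\<^sub>d\<^sub>\<le>\<^sub>z h(d) H(\<lfloor>z/d\<rfloor>)\<close> with harmonic numbers \<open>H\<close>, and
  \<open>H(\<lfloor>x\<rfloor>) = ln x + \<gamma> + O(1/x)\<close>. Only divisors of \<open>Q = \<Prod>\<^sub>p\<^sub>\<le>\<^sub>N p\<^sup>2\<close> contribute,
  and over all of them \<open>\<Sum> h(d) = 1\<close> and \<open>\<Sum> h(d) ln d = -\<Sum>\<^sub>p\<^sub>\<le>\<^sub>N ln p/(p(p-1))\<close>.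
  What is left are the error sums \<open>\<Sum>\<^sub>d\<^sub>\<le>\<^sub>z |h(d)| d/z\<close> and
  \<open>\<Sum>\<^sub>d\<^sub>>\<^sub>z |h(d)| |ln z + \<gamma> - ln d|\<close>, both \<open>O(1/\<surd>z)\<close>: writing \<open>d = a b\<^sup>2\<close> with
  \<open>a\<close> squarefree gives \<open>|h(d)| = 1/(a\<phi>(a) b\<phi>(b))\<close>; the sums over \<open>b\<close> are handled by
  \<open>\<Sum>\<^sub>b\<^sub>\<le>\<^sub>y b/\<phi>(b) \<le> 2y\<close> and \<open>\<Sum>\<^sub>b\<^sub>>\<^sub>y 1/(\<surd>b \<phi>(b)) \<le> 6/\<surd>y\<close>, and the remaining sums over
  squarefree \<open>a\<close> by Euler products, evaluated over the primes up to 29 with a telescoping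
  tail. This gives the bound \<open>55/\<surd>z\<close> for every \<open>N \<ge> z\<close>; let \<open>N \<rightarrow> \<infinity>\<close>.
\<close>

section \<open>Multiplicative functions\<close>

definition multiplicative :: "(nat \<Rightarrow> real) \<Rightarrow> bool" where
  "multiplicative f \<longleftrightarrow> f 1 = 1 \<and> (\<forall>m n. coprime m n \<longrightarrow> f (m * n) = f m * f n)"

lemma multiplicativeD: "multiplicative f \<Longrightarrow> coprime m n \<Longrightarrow> f (m * n) = f m * f n"
  by (simp add: multiplicative_def)

lemma multiplicative_1: "multiplicative f \<Longrightarrow> f 1 = 1"
  by (simp add: multiplicative_def)

lemma multiplicative_mult: "multiplicative f \<Longrightarrow> multiplicative g \<Longrightarrow> multiplicative (\<lambda>n. f n * g n)"
  by (simp add: multiplicative_def)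

lemma multiplicative_divide:
  "multiplicative f \<Longrightarrow> multiplicative g \<Longrightarrow> multiplicative (\<lambda>n. f n / g n)"
  by (simp add: multiplicative_def)

lemma multiplicative_const_1: "multiplicative (\<lambda>_. 1)"
  by (simp add: multiplicative_def)

lemma multiplicative_of_nat: "multiplicative real"
  by (simp add: multiplicative_def)

lemma multiplicative_sqrt: "multiplicative (\<lambda>n. sqrt (real n))"
  by (simp add: multiplicative_def real_sqrt_mult)

lemma multiplicative_totient: "multiplicative (\<lambda>n. real (totient n))"
  by (simp add: multiplicative_def totient_mult_coprime)

lemma multiplicative_squarefree: "multiplicative (\<lambda>n. of_bool (squarefree n))"
  unfolding multiplicative_def
  by (auto dest: squarefree_multD intro: squarefree_mult_coprime)

lemma gcd_mult_divisors_coprime: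
  fixes m n a b :: nat
  assumes "coprime m n" "a dvd m" "b dvd n"
  shows "gcd (a * b) m = a"
proof -
  have "coprime m b"
    using assms by (meson coprime_imp_coprime dvd_refl dvd_trans)
  then have "gcd (a * b) m = gcd a m"
    by (rule gcd_mult_left_right_cancel)
  also have "\<dots> = a"
    using assms(2) by (simp add: gcd_nat.absorb1)
  finally show ?thesis .
qed

text \<open>The inverse of \<open>(d\<^sub>1, d\<^sub>2) \<mapsto> d\<^sub>1 d\<^sub>2\<close> is \<open>d \<mapsto> (gcd d m, gcd d n)\<close>.\<close>
lemma sum_divisors_mult_coprime:
  fixes F :: "nat \<Rightarrow> real" and m n :: nat
  assumes "coprime m n" "m > 0" "n > 0"
  shows "(\<Sum>d | d dvd m * n. F d) = (\<Sum>d\<^sub>1 | d\<^sub>1 dvd m. \<Sum>d\<^sub>2 | d\<^sub>2 dvd n. F (d\<^sub>1 * d\<^sub>2))"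
proof -
  have gcd_pair: "gcd (a * b) m = a" "gcd (a * b) n = b" if "a dvd m" "b dvd n" for a b
  proof -
    show "gcd (a * b) m = a"
      using assms(1) that by (rule gcd_mult_divisors_coprime)
    have "gcd (b * a) n = b"
      using assms(1) that by (intro gcd_mult_divisors_coprime) (simp_all add: coprime_commute)
    then show "gcd (a * b) n = b"
      by (simp add: mult.commute)
  qed
  have gcd_split: "gcd d m * gcd d n = d" if d: "d dvd m * n" for d
  proof -
    obtain a b where "d = a * b" "a dvd m" "b dvd n"
      using division_decomp[OF d] by blast
    then show ?thesis
      using gcd_pair by simp
  qed
  have "(\<Sum>d | d dvd m * n. F d) = (\<Sum>(d\<^sub>1, d\<^sub>2) \<in> {d. d dvd m} \<times> {d. d dvd n}. F (d\<^sub>1 * d\<^sub>2))"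
  proof (rule sum.reindex_bij_witness[of _ "\<lambda>(d\<^sub>1, d\<^sub>2). d\<^sub>1 * d\<^sub>2" "\<lambda>d. (gcd d m, gcd d n)"])
    fix d assume "d \<in> {d. d dvd m * n}"
    then show "(case (gcd d m, gcd d n) of (d\<^sub>1, d\<^sub>2) \<Rightarrow> d\<^sub>1 * d\<^sub>2) = d"
      using gcd_split by simp
  next
    fix q assume "q \<in> {d. d dvd m} \<times> {d. d dvd n}"
    then show "(gcd (case q of (d\<^sub>1, d\<^sub>2) \<Rightarrow> d\<^sub>1 * d\<^sub>2) m, gcd (case q of (d\<^sub>1, d\<^sub>2) \<Rightarrow> d\<^sub>1 * d\<^sub>2) n) = q"
      "(case q of (d\<^sub>1, d\<^sub>2) \<Rightarrow> d\<^sub>1 * d\<^sub>2) \<in> {d. d dvd m * n}"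
      using gcd_pair by (auto intro!: mult_dvd_mono)
  qed (use gcd_split in \<open>auto intro: mult_dvd_mono\<close>)
  also have "\<dots> = (\<Sum>d\<^sub>1 | d\<^sub>1 dvd m. \<Sum>d\<^sub>2 | d\<^sub>2 dvd n. F (d\<^sub>1 * d\<^sub>2))"
    using assms by (simp add: sum.cartesian_product)
  finally show ?thesis .
qed

lemma multiplicative_divisor_sum:
  assumes "multiplicative f"
  shows "multiplicative (\<lambda>n. \<Sum>d | d dvd n. f d)"
  unfolding multiplicative_def
proof (intro conjI allI impI)
  show "(\<Sum>d | d dvd 1. f d) = 1"
    using multiplicative_1[OF assms] by simp
  fix m n :: nat
  assume cop: "coprime m n"
  show "(\<Sum>d | d dvd m * n. f d) = (\<Sum>d | d dvd m. f d) * (\<Sum>d | d dvd n. f d)"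
  proof (cases "m = 0 \<or> n = 0")
    case True
    then show ?thesis using cop by auto
  next
    case False
    have "(\<Sum>d | d dvd m * n. f d) = (\<Sum>d\<^sub>1 | d\<^sub>1 dvd m. \<Sum>d\<^sub>2 | d\<^sub>2 dvd n. f (d\<^sub>1 * d\<^sub>2))"
      using False cop by (simp add: sum_divisors_mult_coprime)
    also have "\<dots> = (\<Sum>d\<^sub>1 | d\<^sub>1 dvd m. \<Sum>d\<^sub>2 | d\<^sub>2 dvd n. f d\<^sub>1 * f d\<^sub>2)"
    proof (intro sum.cong refl)
      fix d\<^sub>1 d\<^sub>2 assume "d\<^sub>1 \<in> {d. d dvd m}" "d\<^sub>2 \<in> {d. d dvd n}"
      then have "coprime d\<^sub>1 d\<^sub>2"
        using cop by (auto intro: coprime_imp_coprime dvd_trans)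
      then show "f (d\<^sub>1 * d\<^sub>2) = f d\<^sub>1 * f d\<^sub>2"
        by (rule multiplicativeD[OF assms])
    qed
    finally show ?thesis
      by (simp add: sum_product)
  qed
qed

lemma prime_power_induct [consumes 1, case_names one prime_power]:
  assumes "n > 0"
    and one: "P 1"
    and prime_power:
      "\<And>p k m. prime p \<Longrightarrow> k > 0 \<Longrightarrow> \<not> p dvd m \<Longrightarrow> m > 0 \<Longrightarrow> P m \<Longrightarrow> P (p ^ k * m)"
  shows "P (n :: nat)"
  using \<open>n > 0\<close>
proof (induction n rule: less_induct)
  case (less n)
  show ?case
  proof (cases "n = 1")
    case True
    then show ?thesis using one by simp
  next
    case False
    then obtain p where p: "prime p" "p dvd n"
      using prime_factor_nat by blast
    obtain m where m: "n = p ^ multiplicity p n * m" "\<not> p dvd m"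
      by (rule multiplicity_decompose'[of n p]) (use p less.prems in auto)
    have k: "multiplicity p n > 0"
      using p less.prems by (simp add: prime_multiplicity_gt_zero_iff)
    have "m > 0"
      using m less.prems by (cases "m = 0") auto
    moreover have "m < n"
    proof -
      have "1 < p ^ multiplicity p n"
        using k prime_gt_1_nat[OF p(1)] by (intro one_less_power) auto
      then show ?thesis
        using m(1) \<open>m > 0\<close> by (metis mult_1 mult_less_mono1)
    qed
    ultimately show ?thesis
      using prime_power[OF p(1) k m(2)] less.IH m(1) by simp
  qed
qed

lemma multiplicative_eqI:
  assumes "multiplicative f" "multiplicative g"
    and "\<And>p k. prime p \<Longrightarrow> k > 0 \<Longrightarrow> f (p ^ k) = g (p ^ k)"
    and "n > 0"
  shows "f n = g n"
  using \<open>n > 0\<close>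
proof (induction n rule: prime_power_induct)
  case one
  then show ?case using assms(1,2)[THEN multiplicative_1] by simp
next
  case (prime_power p k m)
  have "coprime (p ^ k) m"
    using prime_power by (simp add: prime_imp_coprime coprime_power_left_iff)
  then show ?case
    using prime_power assms by (simp add: multiplicativeD)
qed

lemma sum_divisors_prime_power:
  assumes "prime (p :: nat)"
  shows "(\<Sum>d | d dvd p ^ k. f d) = (\<Sum>j\<le>k. f (p ^ j))"
proof -
  have "{d. d dvd p ^ k} = (\<lambda>j. p ^ j) ` {..k}"
    using divides_primepow_nat[OF assms] by auto
  moreover have "inj_on (\<lambda>j. p ^ j) {..k}"
    using prime_gt_1_nat[OF assms] by (auto simp: inj_on_def)
  ultimately show ?thesis
    by (simp add: sum.reindex)
qed

lemma multiplicative_prod_prime_factors: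
  "multiplicative (\<lambda>n. \<Prod>p\<in>prime_factors n. c p (multiplicity p n))"
  unfolding multiplicative_def
proof (intro conjI allI impI)
  fix m n :: nat
  assume cop: "coprime m n"
  show "(\<Prod>p\<in>prime_factors (m * n). c p (multiplicity p (m * n))) =
        (\<Prod>p\<in>prime_factors m. c p (multiplicity p m)) * (\<Prod>p\<in>prime_factors n. c p (multiplicity p n))"
  proof (cases "m = 0 \<or> n = 0")
    case True
    then show ?thesis using cop by auto
  next
    case False
    have disj: "prime_factors m \<inter> prime_factors n = {}"
      using cop False by (auto simp: in_prime_factors_iff dest: coprime_common_divisor_nat)
    have mult_m: "multiplicity p (m * n) = multiplicity p m" if p: "p \<in> prime_factors m" for p
    proof -
      have "\<not> p dvd n"
        using p disj False by (auto simp: in_prime_factors_iff)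
      then show ?thesis
        using p False by (simp add: in_prime_factors_iff prime_elem_multiplicity_mult_distrib
            not_dvd_imp_multiplicity_0)
    qed
    have mult_n: "multiplicity p (m * n) = multiplicity p n" if p: "p \<in> prime_factors n" for p
    proof -
      have "\<not> p dvd m"
        using p disj False by (auto simp: in_prime_factors_iff)
      then show ?thesis
        using p False by (simp add: in_prime_factors_iff prime_elem_multiplicity_mult_distrib
            not_dvd_imp_multiplicity_0)
    qed
    show ?thesis
      using False disj mult_m mult_n
      by (simp add: prime_factors_product prod.union_disjoint cong: prod.cong)
  qed
qed simp

lemma multiplicative_prod_prime_powers:
  assumes "multiplicative g" "finite S" "\<forall>p\<in>S. prime p"
  shows "g (\<Prod>p\<in>S. p ^ k p) = (\<Prod>p\<in>S. g (p ^ k p))"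
  using assms(2,3)
proof (induction S rule: finite_induct)
  case empty
  then show ?case using multiplicative_1[OF assms(1)] by simp
next
  case (insert p S)
  have "coprime (p ^ k p) (\<Prod>q\<in>S. q ^ k q)"
  proof (rule prod_coprime_right)
    fix q assume "q \<in> S"
    then have "coprime p q"
      using insert by (intro primes_coprime) auto
    then show "coprime (p ^ k p) (q ^ k q)"
      by simp
  qed
  then show ?case
    using insert assms(1) by (simp add: multiplicativeD)
qed

lemma prod_prime_factors_squarefree:
  fixes e :: nat
  assumes "squarefree e"
  shows "(\<Prod>p\<in>prime_factors e. p) = e"
proof -
  have "e \<noteq> 0"
    using assms by (metis not_squarefree_0)
  then have "(\<Prod>p\<in>prime_factors e. p ^ multiplicity p e) = e"
    using prod_prime_factors[OF \<open>e \<noteq> 0\<close>] by simp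
  moreover have "\<forall>p\<in>prime_factors e. multiplicity p e = 1"
    using squarefree_factorial_semiring'[OF \<open>e \<noteq> 0\<close>] assms by simp
  ultimately show ?thesis
    by simp
qed

lemma moebius_mu_squared: "(moebius_mu n)^2 = of_bool (squarefree n)"
  by (simp add: moebius_mu_def power_mult[symmetric])

section \<open>The kernel \<open>h\<close>, called \<open>sqf_kernel\<close>\<close>

definition sqf_kernel_local :: "nat \<Rightarrow> nat \<Rightarrow> real" where
  "sqf_kernel_local p k =
    (if k = 1 then 1 / (real p * (real p - 1)) else if k = 2 then - 1 / (real p * (real p - 1)) else 0)"

definition sqf_kernel :: "nat \<Rightarrow> real" where
  "sqf_kernel d = (\<Prod>p\<in>prime_factors d. sqf_kernel_local p (multiplicity p d))"

lemma multiplicative_sqf_kernel: "multiplicative sqf_kernel"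
  unfolding sqf_kernel_def by (rule multiplicative_prod_prime_factors)

lemma sqf_kernel_prime_power:
  "prime p \<Longrightarrow> k > 0 \<Longrightarrow> sqf_kernel (p ^ k) = sqf_kernel_local p k"
  by (simp add: sqf_kernel_def prime_factors_power prime_prime_factors)

lemma sqf_kernel_prime: "prime p \<Longrightarrow> sqf_kernel p = 1 / (real p * (real p - 1))"
  using sqf_kernel_prime_power[of p 1] by (simp add: sqf_kernel_local_def)

lemma sqf_kernel_prime_square:
  "prime p \<Longrightarrow> sqf_kernel (p ^ 2) = - 1 / (real p * (real p - 1))"
  using sqf_kernel_prime_power[of p 2] by (simp add: sqf_kernel_local_def)

lemma sum_atMost_sqf_kernel_prime_power:
  assumes "prime p" "k \<ge> 2"
  shows "(\<Sum>j\<le>k. sqf_kernel (p ^ j) * f j) = f 0 + (f 1 - f 2) / (real p * (real p - 1))"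
proof -
  have "(\<Sum>j\<le>k. sqf_kernel (p ^ j) * f j) = (\<Sum>j\<le>2. sqf_kernel (p ^ j) * f j)"
    using assms by (intro sum.mono_neutral_right) (auto simp: sqf_kernel_prime_power sqf_kernel_local_def)
  also have "\<dots> = sqf_kernel 1 * f 0 + sqf_kernel p * f 1 + sqf_kernel (p ^ 2) * f 2"
    by (simp add: numeral_2_eq_2)
  also have "\<dots> = f 0 + (f 1 - f 2) / (real p * (real p - 1))"
    using assms multiplicative_1[OF multiplicative_sqf_kernel]
    by (simp add: sqf_kernel_prime sqf_kernel_prime_square diff_divide_distrib)
  finally show ?thesis .
qed

lemma real_totient_prime_power_Suc:
  assumes "prime p"
  shows "real (totient (p ^ Suc k)) = real p ^ k * (real p - 1)"
proof -
  have "1 \<le> p"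
    using prime_gt_0_nat[OF assms] by simp
  then show ?thesis
    by (simp only: totient_prime_power_Suc[OF assms]) (simp add: of_nat_diff)
qed

lemma sum_divisors_sqf_kernel_mult:
  assumes "n > 0"
  shows "(\<Sum>d | d dvd n. sqf_kernel d * real d) = of_bool (squarefree n) * real n / real (totient n)"
proof (rule multiplicative_eqI[OF _ _ _ assms])
  show "multiplicative (\<lambda>n. \<Sum>d | d dvd n. sqf_kernel d * real d)"
    by (intro multiplicative_divisor_sum multiplicative_mult multiplicative_sqf_kernel
        multiplicative_of_nat)
  show "multiplicative (\<lambda>n. of_bool (squarefree n) * real n / real (totient n))"
    by (intro multiplicative_divide multiplicative_mult multiplicative_squarefree
        multiplicative_of_nat multiplicative_totient)
  fix p k :: nat
  assume p: "prime p" and k: "k > 0"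
  have p1: "real p > 1"
    using prime_gt_1_nat[OF p] by simp
  show "(\<Sum>d | d dvd p ^ k. sqf_kernel d * real d) =
        of_bool (squarefree (p ^ k)) * real (p ^ k) / real (totient (p ^ k))"
  proof (cases "k = 1")
    case True
    have "(\<Sum>d | d dvd p ^ 1. sqf_kernel d * real d) = sqf_kernel 1 + sqf_kernel p * real p"
      using sum_divisors_prime_power[OF p, of "\<lambda>d. sqf_kernel d * real d" 1] by simp
    also have "\<dots> = real p / (real p - 1)"
      using p p1 multiplicative_1[OF multiplicative_sqf_kernel]
      by (simp add: sqf_kernel_prime field_simps)
    finally show ?thesis
      using True p p1 by (simp add: squarefree_prime totient_prime of_nat_diff)
  next
    case False
    then have "k \<ge> 2" "\<not> squarefree (p ^ k)"
      using k p by (auto simp: squarefree_power_iff prime_gt_1_nat)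
    have "(\<Sum>d | d dvd p ^ k. sqf_kernel d * real d) = (\<Sum>j\<le>k. sqf_kernel (p ^ j) * real (p ^ j))"
      by (rule sum_divisors_prime_power[OF p])
    also have "\<dots> = 1 + (real p - real p ^ 2) / (real p * (real p - 1))"
      using sum_atMost_sqf_kernel_prime_power[OF p \<open>k \<ge> 2\<close>, of "\<lambda>j. real (p ^ j)"] by simp
    also have "\<dots> = 0"
      using p1 by (simp add: field_simps power2_eq_square)
    finally show ?thesis
      using \<open>\<not> squarefree (p ^ k)\<close> by simp
  qed
qed

lemma of_nat_div_totient_eq_sum_divisors:
  assumes "n > 0"
  shows "real n / real (totient n) = (\<Sum>d | d dvd n. of_bool (squarefree d) / real (totient d))"
proof (rule multiplicative_eqI[OF _ _ _ assms])
  show "multiplicative (\<lambda>n. real n / real (totient n))"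
    by (intro multiplicative_divide multiplicative_of_nat multiplicative_totient)
  show "multiplicative (\<lambda>n. \<Sum>d | d dvd n. of_bool (squarefree d) / real (totient d))"
    by (intro multiplicative_divisor_sum multiplicative_divide multiplicative_squarefree
        multiplicative_totient)
  fix p k :: nat
  assume p: "prime p" and k: "k > 0"
  have p1: "real p > 1"
    using prime_gt_1_nat[OF p] by simp
  have "(\<Sum>j\<le>k. of_bool (squarefree (p ^ j)) / real (totient (p ^ j))) =
        (\<Sum>j\<le>1. of_bool (squarefree (p ^ j)) / real (totient (p ^ j)))"
    using p k by (intro sum.mono_neutral_right) (auto simp: squarefree_power_iff prime_gt_1_nat)
  also have "\<dots> = real p / (real p - 1)"
    using p p1 by (simp add: squarefree_prime totient_prime of_nat_diff field_simps)
  also have "\<dots> = real (p ^ k) / real (totient (p ^ k))"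
  proof -
    obtain j where "k = Suc j"
      using k by (cases k) auto
    then show ?thesis
      using real_totient_prime_power_Suc[OF p, of j] p1
      by (simp add: field_simps) (metis distrib_left mult.assoc)
  qed
  finally show "real (p ^ k) / real (totient (p ^ k)) =
                (\<Sum>d | d dvd p ^ k. of_bool (squarefree d) / real (totient d))"
    using p by (simp add: sum_divisors_prime_power)
qed

text \<open>A Leibniz rule: \<open>ln\<close> is additive on the coprime factors \<open>d = d\<^sub>1 d\<^sub>2\<close>.\<close>
lemma sum_divisors_mult_ln_coprime:
  assumes f: "multiplicative f" and mn: "coprime m n" "m > 0" "n > 0"
  shows "(\<Sum>d | d dvd m * n. f d * ln (real d)) =
           (\<Sum>d | d dvd m. f d * ln (real d)) * (\<Sum>d | d dvd n. f d)
         + (\<Sum>d | d dvd m. f d) * (\<Sum>d | d dvd n. f d * ln (real d))"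
proof -
  have "(\<Sum>d | d dvd m * n. f d * ln (real d)) =
        (\<Sum>d\<^sub>1 | d\<^sub>1 dvd m. \<Sum>d\<^sub>2 | d\<^sub>2 dvd n. f (d\<^sub>1 * d\<^sub>2) * ln (real (d\<^sub>1 * d\<^sub>2)))"
    using mn by (rule sum_divisors_mult_coprime)
  also have "\<dots> = (\<Sum>d\<^sub>1 | d\<^sub>1 dvd m. \<Sum>d\<^sub>2 | d\<^sub>2 dvd n.
                    f d\<^sub>1 * ln (real d\<^sub>1) * f d\<^sub>2 + f d\<^sub>1 * (f d\<^sub>2 * ln (real d\<^sub>2)))"
  proof (intro sum.cong refl)
    fix d\<^sub>1 d\<^sub>2 assume d: "d\<^sub>1 \<in> {d. d dvd m}" "d\<^sub>2 \<in> {d. d dvd n}"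
    then have "coprime d\<^sub>1 d\<^sub>2"
      using mn by (auto intro: coprime_imp_coprime dvd_trans)
    moreover have "d\<^sub>1 > 0" "d\<^sub>2 > 0"
      using d mn by (auto intro: Nat.gr0I)
    ultimately show "f (d\<^sub>1 * d\<^sub>2) * ln (real (d\<^sub>1 * d\<^sub>2)) =
                     f d\<^sub>1 * ln (real d\<^sub>1) * f d\<^sub>2 + f d\<^sub>1 * (f d\<^sub>2 * ln (real d\<^sub>2))"
      by (simp add: multiplicativeD[OF f] ln_mult algebra_simps)
  qed
  finally show ?thesis
    by (simp only: sum.distrib sum_product)
qed

lemma sqf_kernel_sums_divisors_square_prod:
  assumes "finite P" "\<forall>p\<in>P. prime p"
  shows "(\<Sum>d | d dvd (\<Prod>p\<in>P. p ^ 2). sqf_kernel d) = 1"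
    and "(\<Sum>d | d dvd (\<Prod>p\<in>P. p ^ 2). sqf_kernel d * ln (real d))
           = - (\<Sum>p\<in>P. ln (real p) / (real p * (real p - 1)))"
proof -
  have "(\<Sum>d | d dvd (\<Prod>p\<in>P. p ^ 2). sqf_kernel d) = 1 \<and>
        (\<Sum>d | d dvd (\<Prod>p\<in>P. p ^ 2). sqf_kernel d * ln (real d))
           = - (\<Sum>p\<in>P. ln (real p) / (real p * (real p - 1)))"
    using assms
  proof (induction P rule: finite_induct)
    case empty
    then show ?case
      using multiplicative_1[OF multiplicative_sqf_kernel] by simp
  next
    case (insert p P)
    have p: "prime p"
      using insert.prems by simp
    define Q where "Q = (\<Prod>q\<in>P. q ^ 2)"
    have "Q > 0"
      using insert.prems by (auto simp: Q_def prime_gt_0_nat intro!: prod_pos)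
    have cop: "coprime (p ^ 2) Q"
      unfolding Q_def
    proof (rule prod_coprime_right)
      fix q assume "q \<in> P"
      then have "coprime p q"
        using insert by (intro primes_coprime) auto
      then show "coprime (p ^ 2) (q ^ 2)"
        by simp
    qed
    have local: "(\<Sum>d | d dvd p ^ 2. sqf_kernel d) = 1"
      "(\<Sum>d | d dvd p ^ 2. sqf_kernel d * ln (real d)) = - ln (real p) / (real p * (real p - 1))"
      using sum_atMost_sqf_kernel_prime_power[OF p, of 2 "\<lambda>_. 1"]
        sum_atMost_sqf_kernel_prime_power[OF p, of 2 "\<lambda>j. ln (real (p ^ j))"]
      by (simp_all add: sum_divisors_prime_power[OF p] ln_realpow)
    have IH: "(\<Sum>d | d dvd Q. sqf_kernel d) = 1"
      "(\<Sum>d | d dvd Q. sqf_kernel d * ln (real d)) = - (\<Sum>p\<in>P. ln (real p) / (real p * (real p - 1)))"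
      using insert by (simp_all add: Q_def)
    have "(\<Prod>q\<in>insert p P. q ^ 2) = p ^ 2 * Q"
      using insert by (simp add: Q_def)
    then show ?case
      using IH local insert(1,2) p \<open>Q > 0\<close> cop prime_gt_0_nat[OF p]
        multiplicativeD[OF multiplicative_divisor_sum[OF multiplicative_sqf_kernel] cop]
        sum_divisors_mult_ln_coprime[OF multiplicative_sqf_kernel cop]
      by simp
  qed
  then show "(\<Sum>d | d dvd (\<Prod>p\<in>P. p ^ 2). sqf_kernel d) = 1"
    and "(\<Sum>d | d dvd (\<Prod>p\<in>P. p ^ 2). sqf_kernel d * ln (real d))
           = - (\<Sum>p\<in>P. ln (real p) / (real p * (real p - 1)))"
    by auto
qed

lemma finite_primes_le: "finite {p :: nat. prime p \<and> p \<le> Y}"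
  by (rule finite_subset[of _ "{..Y}"]) auto

lemma sqf_kernel_nonzero_dvd_square_prod:
  assumes "d > 0" "d \<le> N" "sqf_kernel d \<noteq> 0"
  shows "d dvd (\<Prod>p | prime p \<and> p \<le> N. p ^ 2)"
proof (rule multiplicity_le_imp_dvd)
  show "d \<noteq> 0"
    using assms by simp
  fix p :: nat
  assume p: "prime p"
  show "multiplicity p d \<le> multiplicity p (\<Prod>p | prime p \<and> p \<le> N. p ^ 2)"
  proof (cases "p dvd d")
    case False
    then show ?thesis
      by (simp add: not_dvd_imp_multiplicity_0)
  next
    case True
    then have "p \<in> prime_factors d"
      using p assms by (simp add: in_prime_factors_iff)
    then have "sqf_kernel_local p (multiplicity p d) \<noteq> 0"
      using assms(3) by (auto simp: sqf_kernel_def)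
    then have "multiplicity p d \<le> 2"
      by (auto simp: sqf_kernel_local_def split: if_splits)
    moreover have "p ^ 2 dvd (\<Prod>p | prime p \<and> p \<le> N. p ^ 2)"
      using finite_primes_le p True assms dvd_imp_le[of p d] by (intro dvd_prodI) auto
    then have "2 \<le> multiplicity p (\<Prod>p | prime p \<and> p \<le> N. p ^ 2)"
      using finite_primes_le p by (intro multiplicity_geI) (auto simp: prime_gt_0_nat)
    ultimately show ?thesis
      by simp
  qed
qed

definition recip_n_totient :: "nat \<Rightarrow> real" where
  "recip_n_totient n = 1 / (real n * real (totient n))"

lemma multiplicative_recip_n_totient: "multiplicative recip_n_totient"
  unfolding recip_n_totient_def
  by (intro multiplicative_divide multiplicative_const_1 multiplicative_mult multiplicative_of_nat
      multiplicative_totient)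

lemma recip_n_totient_nonneg: "recip_n_totient n \<ge> 0"
  by (simp add: recip_n_totient_def)

lemma recip_n_totient_prime: "prime p \<Longrightarrow> recip_n_totient p = 1 / (real p * (real p - 1))"
  using prime_gt_0_nat[of p] by (simp add: recip_n_totient_def totient_prime of_nat_diff)

lemma abs_sqf_kernel_eq:
  assumes "d > 0" "sqf_kernel d \<noteq> 0"
  shows "\<exists>a b. d = a * b ^ 2 \<and> squarefree a \<and> \<bar>sqf_kernel d\<bar> = recip_n_totient a * recip_n_totient b"
  using assms
proof (induction d rule: prime_power_induct)
  case one
  then show ?case
    using multiplicative_1[OF multiplicative_sqf_kernel] multiplicative_1[OF multiplicative_recip_n_totient]
    by (intro exI[of _ 1]) simp
next
  case (prime_power p k m)
  have "coprime (p ^ k) m"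
    using prime_power by (simp add: prime_imp_coprime coprime_power_left_iff)
  then have split: "sqf_kernel (p ^ k * m) = sqf_kernel_local p k * sqf_kernel m"
    using prime_power by (simp add: multiplicativeD[OF multiplicative_sqf_kernel] sqf_kernel_prime_power)
  then have "sqf_kernel_local p k \<noteq> 0" "sqf_kernel m \<noteq> 0"
    using prime_power.prems by auto
  obtain a b where ab: "m = a * b ^ 2" "squarefree a" "\<bar>sqf_kernel m\<bar> = recip_n_totient a * recip_n_totient b"
    using prime_power.IH \<open>sqf_kernel m \<noteq> 0\<close> by blast
  have "\<not> p dvd a" "\<not> p dvd b"
    using prime_power(3) ab(1) by (auto simp: power2_eq_square)
  then have "coprime p a" "coprime p b"
    using prime_power(1) by (simp_all add: prime_imp_coprime)
  have local: "\<bar>sqf_kernel_local p k\<bar> = recip_n_totient p"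
    using \<open>sqf_kernel_local p k \<noteq> 0\<close> prime_gt_1_nat[OF prime_power(1)] prime_power(1)
    by (auto simp: sqf_kernel_local_def recip_n_totient_prime split: if_splits)
  have "k = 1 \<or> k = 2"
    using \<open>sqf_kernel_local p k \<noteq> 0\<close> by (auto simp: sqf_kernel_local_def split: if_splits)
  then show ?case
  proof
    assume "k = 1"
    have "squarefree (p * a)"
      using \<open>coprime p a\<close> ab(2) prime_power(1) by (intro squarefree_mult_coprime) (auto simp: squarefree_prime)
    then show ?case
      using \<open>k = 1\<close> ab split local \<open>coprime p a\<close>
      by (intro exI[of _ "p * a"] exI[of _ b])
        (simp add: abs_mult multiplicativeD[OF multiplicative_recip_n_totient])
  next
    assume "k = 2"
    then show ?case
      using ab split local \<open>coprime p b\<close>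
      by (intro exI[of _ a] exI[of _ "p * b"])
        (simp add: abs_mult multiplicativeD[OF multiplicative_recip_n_totient] power_mult_distrib)
  qed
qed

lemma sum_abs_sqf_kernel_le:
  fixes F :: "nat \<Rightarrow> real"
  assumes "D \<subseteq> {1..X}" "\<And>d. F d \<ge> 0"
  shows "(\<Sum>d\<in>D. \<bar>sqf_kernel d\<bar> * F d) \<le>
         (\<Sum>a | a \<in> {1..X} \<and> squarefree a. recip_n_totient a *
            (\<Sum>b | b \<in> {1..X} \<and> a * b ^ 2 \<in> D. recip_n_totient b * F (a * b ^ 2)))"
proof -
  define S where "S = Sigma {a \<in> {1..X}. squarefree a} (\<lambda>a. {b \<in> {1..X}. a * b ^ 2 \<in> D})"
  have "finite D"
    using assms(1) finite_subset by blast
  have "(\<Sum>d\<in>D. \<bar>sqf_kernel d\<bar> * F d) = (\<Sum>d | d \<in> D \<and> sqf_kernel d \<noteq> 0. \<bar>sqf_kernel d\<bar> * F d)"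
    using \<open>finite D\<close> by (intro sum.mono_neutral_right) auto
  also have "\<dots> \<le> (\<Sum>(a, b)\<in>S. recip_n_totient a * recip_n_totient b * F (a * b ^ 2))"
  proof (rule sum_le_included[where i = "\<lambda>(a, b). a * b ^ 2"])
    show "finite {d. d \<in> D \<and> sqf_kernel d \<noteq> 0}" "finite S"
      using \<open>finite D\<close> by (auto simp: S_def)
    show "\<forall>q\<in>S. 0 \<le> (case q of (a, b) \<Rightarrow> recip_n_totient a * recip_n_totient b * F (a * b ^ 2))"
      using assms(2) recip_n_totient_nonneg by auto
    show "\<forall>d\<in>{d. d \<in> D \<and> sqf_kernel d \<noteq> 0}. \<exists>q\<in>S. (case q of (a, b) \<Rightarrow> a * b ^ 2) = d \<and>
            \<bar>sqf_kernel d\<bar> * F d \<le> (case q of (a, b) \<Rightarrow> recip_n_totient a * recip_n_totient b * F (a * b ^ 2))"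
    proof
      fix d assume d: "d \<in> {d. d \<in> D \<and> sqf_kernel d \<noteq> 0}"
      then have "d \<in> {1..X}" "sqf_kernel d \<noteq> 0"
        using assms(1) by auto
      then have "d > 0"
        by simp
      obtain a b where ab: "d = a * b ^ 2" "squarefree a"
          "\<bar>sqf_kernel d\<bar> = recip_n_totient a * recip_n_totient b"
        using abs_sqf_kernel_eq[OF \<open>d > 0\<close> \<open>sqf_kernel d \<noteq> 0\<close>] by blast
      have "a > 0" "b > 0"
        using ab(1) \<open>d > 0\<close> by (auto intro: Nat.gr0I)
      have "a \<le> d"
        using ab(1) \<open>d > 0\<close> by (simp add: dvd_imp_le)
      have "b \<le> b ^ 2"
        using \<open>b > 0\<close> by (simp add: power2_eq_square)
      also have "\<dots> \<le> d"
        using ab(1) \<open>d > 0\<close> by (simp add: dvd_imp_le)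
      finally have "b \<le> d" .
      then have "a \<le> X" "b \<le> X"
        using \<open>a \<le> d\<close> \<open>d \<in> {1..X}\<close> by auto
      then have "(a, b) \<in> S"
        using ab(1,2) d \<open>a > 0\<close> \<open>b > 0\<close> by (simp add: S_def)
      then show "\<exists>q\<in>S. (case q of (a, b) \<Rightarrow> a * b ^ 2) = d \<and>
            \<bar>sqf_kernel d\<bar> * F d \<le> (case q of (a, b) \<Rightarrow> recip_n_totient a * recip_n_totient b * F (a * b ^ 2))"
        using ab by (intro bexI[of _ "(a, b)"]) simp_all
    qed
  qed
  also have "\<dots> = (\<Sum>a | a \<in> {1..X} \<and> squarefree a. recip_n_totient a *
                     (\<Sum>b | b \<in> {1..X} \<and> a * b ^ 2 \<in> D. recip_n_totient b * F (a * b ^ 2)))"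
    unfolding S_def by (simp add: sum.Sigma[symmetric] sum_distrib_left mult.assoc)
  finally show ?thesis .
qed

lemma mult_preimage_subset_atMost:
  assumes "B \<subseteq> {1..X}" "(d :: nat) > 0"
  shows "{k. d * k \<in> B} \<subseteq> {..X}"
proof
  fix k assume "k \<in> {k. d * k \<in> B}"
  then have "d * k \<le> X"
    using assms(1) by auto
  moreover have "k \<le> d * k"
    using assms(2) by simp
  ultimately show "k \<in> {..X}"
    by (meson atMost_iff le_trans)
qed

lemma sum_divisors_swap:
  fixes G :: "nat \<Rightarrow> nat \<Rightarrow> real"
  assumes "B \<subseteq> {1..X}"
  shows "(\<Sum>n\<in>B. \<Sum>d | d dvd n. G d (n div d)) = (\<Sum>d\<in>{1..X}. \<Sum>k | d * k \<in> B. G d k)"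
proof -
  have fin: "finite B" "\<forall>n\<in>B. finite {d. d dvd n}"
    using assms by (auto intro: finite_subset)
  have fin': "finite {k. d * k \<in> B}" if "d \<in> {1..X}" for d
    using mult_preimage_subset_atMost[OF assms, of d] that by (auto intro: finite_subset)
  have "(\<Sum>n\<in>B. \<Sum>d | d dvd n. G d (n div d)) = (\<Sum>(n, d)\<in>Sigma B (\<lambda>n. {d. d dvd n}). G d (n div d))"
    using fin by (simp add: sum.Sigma)
  also have "\<dots> = (\<Sum>(d, k)\<in>Sigma {1..X} (\<lambda>d. {k. d * k \<in> B}). G d k)"
  proof (rule sum.reindex_bij_witness[of _ "\<lambda>(d, k). (d * k, d)" "\<lambda>(n, d). (d, n div d)"])
    fix q assume "q \<in> Sigma B (\<lambda>n. {d. d dvd n})"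
    then obtain n d where q: "q = (n, d)" "n \<in> B" "d dvd n"
      by auto
    then have "n > 0" "n \<le> X"
      using assms by auto
    then have "d > 0" "d \<le> X"
      using q(3) dvd_imp_le[OF q(3)] by (auto intro: Nat.gr0I)
    show "(case (case q of (n, d) \<Rightarrow> (d, n div d)) of (d, k) \<Rightarrow> (d * k, d)) = q"
      using q by simp
    show "(case q of (n, d) \<Rightarrow> (d, n div d)) \<in> Sigma {1..X} (\<lambda>d. {k. d * k \<in> B})"
      using q \<open>d > 0\<close> \<open>d \<le> X\<close> by simp
    show "(case (case q of (n, d) \<Rightarrow> (d, n div d)) of (d, k) \<Rightarrow> G d k) =
          (case q of (n, d) \<Rightarrow> G d (n div d))"
      using q by simp
  next
    fix q assume "q \<in> Sigma {1..X} (\<lambda>d. {k. d * k \<in> B})"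
    then obtain d k where q: "q = (d, k)" "d \<ge> 1" "d * k \<in> B"
      by auto
    then show "(case (case q of (d, k) \<Rightarrow> (d * k, d)) of (n, d) \<Rightarrow> (d, n div d)) = q"
      "(case q of (d, k) \<Rightarrow> (d * k, d)) \<in> Sigma B (\<lambda>n. {d. d dvd n})"
      by simp_all
  qed
  also have "\<dots> = (\<Sum>d\<in>{1..X}. \<Sum>k | d * k \<in> B. G d k)"
    using fin' by (simp add: sum.Sigma)
  finally show ?thesis .
qed

lemma mult_in_atLeastAtMost_iff: "(d :: nat) > 0 \<Longrightarrow> {k. d * k \<in> {1..Y}} = {1..Y div d}"
  by (auto simp: less_eq_div_iff_mult_less_eq mult.commute)

lemma S1_eq_sum_sqf_kernel_harm:
  "S1 z = (\<Sum>d\<in>{1..nat \<lfloor>z\<rfloor>}. sqf_kernel d * harm (nat \<lfloor>z\<rfloor> div d))"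
proof -
  define Z where "Z = nat \<lfloor>z\<rfloor>"
  have "S1 z = (\<Sum>n\<in>{1..Z}. \<Sum>d | d dvd n. sqf_kernel d * inverse (real (n div d)))"
    unfolding S1_def Z_def
  proof (intro sum.cong refl)
    fix n assume "n \<in> {1..nat \<lfloor>z\<rfloor>}"
    then have "n > 0"
      by simp
    have "(moebius_mu n)\<^sup>2 / real (totient n) = (\<Sum>d | d dvd n. sqf_kernel d * real d) / real n"
      using \<open>n > 0\<close> by (simp add: moebius_mu_squared sum_divisors_sqf_kernel_mult)
    also have "\<dots> = (\<Sum>d | d dvd n. sqf_kernel d * inverse (real (n div d)))"
      unfolding sum_divide_distrib
    proof (intro sum.cong refl)
      fix d assume "d \<in> {d. d dvd n}"
      then obtain e where "n = d * e"
        by auto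
      with \<open>n > 0\<close> show "sqf_kernel d * real d / real n = sqf_kernel d * inverse (real (n div d))"
        by (simp add: field_simps)
    qed
    finally show "(moebius_mu n)\<^sup>2 / real (totient n) =
                  (\<Sum>d | d dvd n. sqf_kernel d * inverse (real (n div d)))" .
  qed
  also have "\<dots> = (\<Sum>d\<in>{1..Z}. \<Sum>k | d * k \<in> {1..Z}. sqf_kernel d * inverse (real k))"
    by (rule sum_divisors_swap) simp
  also have "\<dots> = (\<Sum>d\<in>{1..Z}. sqf_kernel d * harm (Z div d))"
    by (intro sum.cong refl, subst mult_in_atLeastAtMost_iff) (auto simp: harm_def sum_distrib_left)
  finally show ?thesis
    by (simp add: Z_def)
qed

section \<open>Euler products\<close>

lemma sum_squarefree_le_prod_primes:
  assumes g: "multiplicative g" "\<And>n. g n \<ge> 0" and B: "B \<subseteq> {1..Y}"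
  shows "(\<Sum>e | e \<in> B \<and> squarefree e. g e) \<le> (\<Prod>p | prime p \<and> p \<le> Y. 1 + g p)"
proof -
  define P where "P = {p. prime p \<and> p \<le> Y}"
  define Bs where "Bs = {e. e \<in> B \<and> squarefree e}"
  have prod_pf: "(\<Prod>p\<in>prime_factors e. p) = e" if "e \<in> Bs" for e
    using that by (simp add: Bs_def prod_prime_factors_squarefree)
  have "(\<Sum>e\<in>Bs. g e) = (\<Sum>e\<in>Bs. \<Prod>p\<in>prime_factors e. g p)"
  proof (intro sum.cong refl)
    fix e assume "e \<in> Bs"
    then have "g e = g (\<Prod>p\<in>prime_factors e. p ^ 1)"
      using prod_pf by simp
    also have "\<dots> = (\<Prod>p\<in>prime_factors e. g p)"
      using multiplicative_prod_prime_powers[OF g(1), of "prime_factors e" "\<lambda>_. 1"]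
      by (simp add: in_prime_factors_imp_prime)
    finally show "g e = (\<Prod>p\<in>prime_factors e. g p)" .
  qed
  also have "\<dots> = (\<Sum>S\<in>prime_factors ` Bs. \<Prod>p\<in>S. g p)"
  proof -
    have "inj_on prime_factors Bs"
      by (rule inj_onI) (metis prod_pf)
    then show ?thesis
      by (simp add: sum.reindex)
  qed
  also have "\<dots> \<le> (\<Sum>S\<in>Pow P. \<Prod>p\<in>S. g p)"
  proof (rule sum_mono2)
    show "finite (Pow P)"
      using finite_primes_le by (simp add: P_def)
    show "prime_factors ` Bs \<subseteq> Pow P"
    proof clarify
      fix e p assume "e \<in> Bs" "p \<in> prime_factors e"
      then have "prime p" "p dvd e" "e > 0" "e \<le> Y"
        using B by (auto simp: Bs_def in_prime_factors_iff)
      then show "p \<in> P"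
        using dvd_imp_le[of p e] by (simp add: P_def)
    qed
  qed (use g(2) in \<open>simp add: prod_nonneg\<close>)
  also have "\<dots> = (\<Prod>p\<in>P. g p + 1)"
    using prod_add[of P g "\<lambda>_. 1"] finite_primes_le by (simp add: P_def)
  finally show ?thesis
    by (simp add: Bs_def P_def add.commute)
qed

lemma prod_primes_le_exp_tail:
  fixes g :: "nat \<Rightarrow> real"
  assumes g: "\<And>n. g n \<ge> 0"
  shows "(\<Prod>p | prime p \<and> p \<le> Y. 1 + g p) \<le> (\<Prod>p | prime p \<and> p \<le> m. 1 + g p) * exp (\<Sum>n\<in>{m<..Y}. g n)"
proof -
  define A where "A = {p. prime p \<and> p \<le> Y \<and> p \<le> m}"
  define C where "C = {p. prime p \<and> p \<le> Y \<and> m < p}"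
  have fin: "finite A" "finite C"
    unfolding A_def C_def by (rule finite_subset[OF _ finite_primes_le[of Y]], blast)+
  have "(\<Prod>p | prime p \<and> p \<le> Y. 1 + g p) = (\<Prod>p\<in>A. 1 + g p) * (\<Prod>p\<in>C. 1 + g p)"
    using fin by (subst prod.union_disjoint[symmetric]) (auto simp: A_def C_def intro: prod.cong)
  also have "\<dots> \<le> (\<Prod>p | prime p \<and> p \<le> m. 1 + g p) * exp (\<Sum>n\<in>{m<..Y}. g n)"
  proof (rule mult_mono)
    show "(\<Prod>p\<in>A. 1 + g p) \<le> (\<Prod>p | prime p \<and> p \<le> m. 1 + g p)"
      using g finite_primes_le by (intro prod_mono2) (auto simp: A_def add_nonneg_nonneg)
    have "(\<Prod>p\<in>C. 1 + g p) \<le> (\<Prod>p\<in>C. exp (g p))"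
      using g by (intro prod_mono) (auto simp: add.commute exp_ge_add_one_self)
    also have "\<dots> = exp (\<Sum>p\<in>C. g p)"
      using fin by (simp add: exp_sum)
    also have "\<dots> \<le> exp (\<Sum>n\<in>{m<..Y}. g n)"
      using g by (intro exp_mono sum_mono2) (auto simp: C_def)
    finally show "(\<Prod>p\<in>C. 1 + g p) \<le> exp (\<Sum>n\<in>{m<..Y}. g n)" .
  qed (use g in \<open>auto intro: prod_nonneg add_nonneg_nonneg\<close>)
  finally show ?thesis .
qed

lemma primes_le_29: "{p :: nat. prime p \<and> p \<le> 29} \<subseteq> {2, 3, 5, 7, 11, 13, 17, 19, 23, 29}"
proof
  fix p :: nat
  assume "p \<in> {p. prime p \<and> p \<le> 29}"
  then have p: "prime p" "p \<le> 29"
    by auto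
  then have "p \<ge> 2" "\<And>q. q dvd p \<Longrightarrow> q = 1 \<or> q = p"
    by (simp_all add: prime_ge_2_nat prime_nat_iff)
  then have "2 dvd p \<longrightarrow> p = 2" "3 dvd p \<longrightarrow> p = 3" "5 dvd p \<longrightarrow> p = 5"
    by force+
  then have "p = 2 \<or> p = 3 \<or> p = 5 \<or> p = 7 \<or> p = 11 \<or> p = 13 \<or> p = 17 \<or> p = 19 \<or> p = 23 \<or> p = 29"
    using \<open>p \<ge> 2\<close> p(2) by presburger
  then show "p \<in> {2, 3, 5, 7, 11, 13, 17, 19, 23, 29}"
    by auto
qed

lemma sum_greaterThanAtMost_telescope_le:
  fixes f u :: "nat \<Rightarrow> real"
  assumes "\<And>n. m < n \<Longrightarrow> f n \<le> c * (u (n - 1) - u n)" "m \<le> Y"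
  shows "(\<Sum>n\<in>{m<..Y}. f n) \<le> c * (u m - u Y)"
  using assms(2)
proof (induction Y rule: dec_induct)
  case (step Y)
  have "{m<..Suc Y} = insert (Suc Y) {m<..Y}"
    using step.hyps by auto
  then have "(\<Sum>n\<in>{m<..Suc Y}. f n) = f (Suc Y) + (\<Sum>n\<in>{m<..Y}. f n)"
    by simp
  also have "\<dots> \<le> c * (u Y - u (Suc Y)) + c * (u m - u Y)"
    using assms(1)[of "Suc Y"] step by (intro add_mono) auto
  finally show ?case
    by (simp add: algebra_simps)
qed simp

lemma prod_primes_le_bound:
  fixes g :: "nat \<Rightarrow> real"
  assumes g: "\<And>n. g n \<ge> 0"
    and small: "(\<Prod>p\<in>{2, 3, 5, 7, 11, 13, 17, 19, 23, 29}. 1 + g p) \<le> A"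
    and tail: "\<And>Y. (\<Sum>n\<in>{29<..Y}. g n) \<le> t" and "t < 1"
  shows "(\<Prod>p | prime p \<and> p \<le> Y. 1 + g p) \<le> A / (1 - t)"
proof -
  have "t \<ge> 0"
    using tail[of 0] by simp
  have "(\<Prod>p | prime p \<and> p \<le> Y. 1 + g p) \<le>
        (\<Prod>p | prime p \<and> p \<le> 29. 1 + g p) * exp (\<Sum>n\<in>{29<..Y}. g n)"
    using g by (rule prod_primes_le_exp_tail)
  also have "\<dots> \<le> A * exp t"
  proof (rule mult_mono)
    have "(\<Prod>p | prime p \<and> p \<le> 29. 1 + g p) \<le> (\<Prod>p\<in>{2, 3, 5, 7, 11, 13, 17, 19, 23, 29}. 1 + g p)"
      using primes_le_29 g by (intro prod_mono2) (auto simp: add_nonneg_nonneg)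
    then show "(\<Prod>p | prime p \<and> p \<le> 29. 1 + g p) \<le> A"
      using small by linarith
  qed (use g tail in \<open>auto intro: prod_nonneg add_nonneg_nonneg order.trans[OF _ small]\<close>)
  also have "\<dots> \<le> A / (1 - t)"
  proof -
    have "1 - t \<le> exp (- t)"
      using exp_ge_add_one_self[of "- t"] by simp
    then have "exp t * (1 - t) \<le> 1"
      using \<open>t < 1\<close> by (simp add: exp_minus field_simps)
    then have "exp t \<le> 1 / (1 - t)"
      using \<open>t < 1\<close> by (simp add: pos_le_divide_eq)
    moreover have "A \<ge> 0"
      using small g by (smt (verit) add_nonneg_nonneg prod_nonneg)
    ultimately show ?thesis
      using mult_left_mono by fastforce
  qed
  finally show ?thesis .
qed

lemma sum_inverse_mult_pred_tail: "(\<Sum>n\<in>{29<..Y}. 1 / (real n * (real n - 1))) \<le> 1 / 29"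
proof (cases "29 \<le> Y")
  case True
  have "(\<Sum>n\<in>{29<..Y}. 1 / (real n * (real n - 1))) \<le> 1 * (1 / real 29 - 1 / real Y)"
  proof (rule sum_greaterThanAtMost_telescope_le[OF _ True])
    fix n :: nat assume "29 < n"
    then show "1 / (real n * (real n - 1)) \<le> 1 * (1 / real (n - 1) - 1 / real n)"
      by (simp add: of_nat_diff field_simps)
  qed
  also have "\<dots> \<le> 1 / 29"
    by simp
  finally show ?thesis .
qed simp

lemma prod_primes_recip_n_totient_le: "(\<Prod>p | prime p \<and> p \<le> Y. 1 + recip_n_totient p) \<le> 2"
proof -
  have "(\<Prod>p | prime p \<and> p \<le> Y. 1 + recip_n_totient p) =
        (\<Prod>p | prime p \<and> p \<le> Y. 1 + 1 / (real p * (real p - 1)))"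
    by (intro prod.cong refl) (simp add: recip_n_totient_prime)
  also have "\<dots> \<le> (19294 / 10000) / (1 - 1 / 29)"
  proof (rule prod_primes_le_bound[OF _ _ sum_inverse_mult_pred_tail])
    show "0 \<le> 1 / (real n * (real n - 1))" for n
      by (cases n) simp_all
  qed simp_all
  also have "\<dots> \<le> 2"
    by simp
  finally show ?thesis .
qed

lemma inverse_sqrt_diff:
  assumes "n \<ge> 2"
  shows "1 / sqrt (real (n - 1)) - 1 / sqrt (real n) =
           1 / (sqrt (real n) * sqrt (real (n - 1)) * (sqrt (real n) + sqrt (real (n - 1))))"
proof -
  define s t where "s = sqrt (real n)" and "t = sqrt (real (n - 1))"
  have "s > 0" "t > 0"
    using assms by (simp_all add: s_def t_def)
  have "s * s = real n" "t * t = real n - 1"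
    using assms by (simp_all add: s_def t_def of_nat_diff)
  then have "(s - t) * (s + t) = 1"
    by (simp add: algebra_simps)
  then have "s - t = 1 / (s + t)"
    using \<open>s > 0\<close> \<open>t > 0\<close> by (simp add: eq_divide_eq)
  have "1 / t - 1 / s = (s - t) / (s * t)"
    using \<open>s > 0\<close> \<open>t > 0\<close> by (simp add: field_simps)
  also have "\<dots> = 1 / (s * t * (s + t))"
    unfolding \<open>s - t = 1 / (s + t)\<close> by simp
  finally show ?thesis
    by (simp add: s_def t_def)
qed

lemma sqrt_ge_am_gm:
  fixes a x :: real
  assumes "a > 0" "x \<ge> 0"
  shows "2 * a * x / (x + a\<^sup>2) \<le> sqrt x"
proof -
  have "2 * a * sqrt x \<le> x + a\<^sup>2"
    using assms sum_squares_ge_zero[of "sqrt x - a" 0] by (simp add: power2_eq_square algebra_simps)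
  then have "2 * a * sqrt x * sqrt x \<le> (x + a\<^sup>2) * sqrt x"
    using assms by (intro mult_right_mono) simp_all
  moreover have "2 * a * sqrt x * sqrt x = 2 * a * x"
    using assms(2) by (simp only: mult.assoc real_sqrt_mult_self)
  ultimately have "2 * a * x \<le> sqrt x * (x + a\<^sup>2)"
    by (simp only: mult.commute)
  moreover have "x + a\<^sup>2 > 0"
    using assms by (simp add: add_nonneg_pos)
  ultimately show ?thesis
    by (simp add: pos_divide_le_eq mult.commute)
qed

definition recip_sqrt_totient :: "nat \<Rightarrow> real" where
  "recip_sqrt_totient n = 1 / (sqrt (real n) * real (totient n))"

lemma multiplicative_recip_sqrt_totient: "multiplicative recip_sqrt_totient"
  unfolding recip_sqrt_totient_def
  by (intro multiplicative_divide multiplicative_const_1 multiplicative_mult multiplicative_sqrt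
      multiplicative_totient)

lemma inverse_sqrt_mult_pred_le:
  assumes "n \<ge> 6"
  shows "1 / (sqrt (real n) * (real n - 1)) \<le> 21 / 10 * (1 / sqrt (real (n - 1)) - 1 / sqrt (real n))"
proof -
  define s t where "s = sqrt (real n)" and "t = sqrt (real (n - 1))"
  have "t > 0" "s > 0" "t\<^sup>2 = real n - 1"
    using assms by (simp_all add: s_def t_def of_nat_diff)
  have "(11 / 10 * t)\<^sup>2 = 121 / 100 * (real n - 1)"
    using \<open>t\<^sup>2 = real n - 1\<close> by (simp add: power_mult_distrib power_divide)
  then have "s \<le> 11 / 10 * t"
    unfolding s_def using assms \<open>t > 0\<close> by (intro real_le_lsqrt) simp_all
  then have "s * t * (s + t) \<le> s * t * (21 / 10 * t)"
    using \<open>t > 0\<close> \<open>s > 0\<close> by (intro mult_left_mono) simp_all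
  have "1 / (sqrt (real n) * (real n - 1)) = 21 / 10 * (1 / (s * t * (21 / 10 * t)))"
    using \<open>t\<^sup>2 = real n - 1\<close> by (simp add: s_def power2_eq_square mult.assoc)
  also have "\<dots> \<le> 21 / 10 * (1 / (s * t * (s + t)))"
    using \<open>s * t * (s + t) \<le> s * t * (21 / 10 * t)\<close> \<open>t > 0\<close> \<open>s > 0\<close>
    by (intro mult_left_mono divide_left_mono mult_pos_pos) simp_all
  also have "\<dots> = 21 / 10 * (1 / sqrt (real (n - 1)) - 1 / sqrt (real n))"
    using inverse_sqrt_diff[of n] assms by (simp only: s_def t_def)
  finally show ?thesis .
qed

lemma sum_inverse_sqrt_mult_pred_tail:
  "(\<Sum>n\<in>{29<..Y}. 1 / (sqrt (real n) * (real n - 1))) \<le> 39 / 100"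
proof (cases "29 \<le> Y")
  case True
  have "(\<Sum>n\<in>{29<..Y}. 1 / (sqrt (real n) * (real n - 1))) \<le>
        21 / 10 * (1 / sqrt (real 29) - 1 / sqrt (real Y))"
    using inverse_sqrt_mult_pred_le by (intro sum_greaterThanAtMost_telescope_le[OF _ True]) simp
  also have "\<dots> \<le> 21 / 10 * (1 / sqrt 29)"
    by simp
  also have "\<dots> \<le> 21 / 10 * (1 / (5385 / 1000))"
  proof -
    have "5385 / 1000 \<le> sqrt (29 :: real)"
      by (rule real_le_rsqrt) (simp add: power2_eq_square)
    then show ?thesis
      by (intro mult_left_mono divide_left_mono) auto
  qed
  finally show ?thesis
    by simp
qed simp

lemma prod_small_primes_inverse_sqrt_le:
  "(\<Prod>p\<in>{2, 3, 5, 7, 11, 13, 17, 19, 23, 29}. 1 + 1 / (sqrt (real p) * (real p - 1))) \<le> 287 / 100"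
proof -
  text \<open>\<open>a = 1 + p / 5\<close> is close enough to \<open>\<surd>p\<close> for \<open>p \<le> 29\<close>.\<close>
  define a :: "nat \<Rightarrow> real" where "a p = 1 + real p / 5" for p
  have "(\<Prod>p\<in>{2, 3, 5, 7, 11, 13, 17, 19, 23, 29}. 1 + 1 / (sqrt (real p) * (real p - 1))) \<le>
        (\<Prod>p\<in>{2, 3, 5, 7, 11, 13, 17, 19, 23, 29}. 1 + (real p + (a p)\<^sup>2) / (2 * a p * real p * (real p - 1)))"
  proof (rule prod_mono)
    fix p :: nat assume "p \<in> {2, 3, 5, 7, 11, 13, 17, 19, 23, 29}"
    then have "real p \<ge> 2"
      by auto
    have "2 * a p * real p / (real p + (a p)\<^sup>2) \<le> sqrt (real p)"
      using \<open>real p \<ge> 2\<close> by (intro sqrt_ge_am_gm) (simp_all add: a_def)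
    then have "1 / (sqrt (real p) * (real p - 1)) \<le> 1 / (2 * a p * real p / (real p + (a p)\<^sup>2) * (real p - 1))"
      using \<open>real p \<ge> 2\<close>
      by (intro divide_left_mono mult_right_mono mult_pos_pos) (simp_all add: a_def add_pos_pos)
    also have "\<dots> = (real p + (a p)\<^sup>2) / (2 * a p * real p * (real p - 1))"
      by simp
    finally show "0 \<le> 1 + 1 / (sqrt (real p) * (real p - 1)) \<and>
        1 + 1 / (sqrt (real p) * (real p - 1)) \<le> 1 + (real p + (a p)\<^sup>2) / (2 * a p * real p * (real p - 1))"
      using \<open>real p \<ge> 2\<close> by simp
  qed
  also have "\<dots> \<le> 287 / 100"
    by (simp add: a_def power2_eq_square)
  finally show ?thesis .
qed

lemma prod_primes_recip_sqrt_totient_le: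
  "(\<Prod>p | prime p \<and> p \<le> Y. 1 + recip_sqrt_totient p) \<le> 5"
proof -
  have "(\<Prod>p | prime p \<and> p \<le> Y. 1 + recip_sqrt_totient p) =
        (\<Prod>p | prime p \<and> p \<le> Y. 1 + 1 / (sqrt (real p) * (real p - 1)))"
    by (intro prod.cong refl) (auto simp: recip_sqrt_totient_def totient_prime of_nat_diff
        Suc_le_eq dest: prime_gt_0_nat)
  also have "\<dots> \<le> (287 / 100) / (1 - 39 / 100)"
  proof (rule prod_primes_le_bound[OF _ prod_small_primes_inverse_sqrt_le sum_inverse_sqrt_mult_pred_tail])
    show "0 \<le> 1 / (sqrt (real n) * (real n - 1))" for n
      by (cases n) simp_all
  qed simp
  also have "\<dots> \<le> 5"
    by simp
  finally show ?thesis .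
qed

lemma sum_squarefree_recip_n_totient_le:
  assumes "B \<subseteq> {1..Y}"
  shows "(\<Sum>e | e \<in> B \<and> squarefree e. recip_n_totient e) \<le> 2"
  using sum_squarefree_le_prod_primes[OF multiplicative_recip_n_totient recip_n_totient_nonneg assms]
    prod_primes_recip_n_totient_le[of Y] by linarith

lemma sum_squarefree_recip_sqrt_totient_le:
  assumes "B \<subseteq> {1..Y}"
  shows "(\<Sum>e | e \<in> B \<and> squarefree e. recip_sqrt_totient e) \<le> 5"
  using sum_squarefree_le_prod_primes[OF multiplicative_recip_sqrt_totient _ assms]
    prod_primes_recip_sqrt_totient_le[of Y] by (simp add: recip_sqrt_totient_def)

lemma sum_of_nat_div_totient_le:
  fixes y :: real
  assumes "y \<ge> 0" "\<forall>b\<in>B. 1 \<le> b \<and> real b \<le> y"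
  shows "(\<Sum>b\<in>B. real b / real (totient b)) \<le> 2 * y"
proof -
  define Y where "Y = nat \<lfloor>y\<rfloor>"
  have "B \<subseteq> {1..Y}"
    using assms by (auto simp: Y_def le_nat_floor)
  then have "(\<Sum>b\<in>B. real b / real (totient b)) \<le> (\<Sum>n\<in>{1..Y}. real n / real (totient n))"
    by (intro sum_mono2) auto
  also have "\<dots> = (\<Sum>n\<in>{1..Y}. \<Sum>e | e dvd n. of_bool (squarefree e) / real (totient e))"
    by (intro sum.cong refl) (simp add: of_nat_div_totient_eq_sum_divisors)
  also have "\<dots> = (\<Sum>e\<in>{1..Y}. \<Sum>k | e * k \<in> {1..Y}. of_bool (squarefree e) / real (totient e))"
    using sum_divisors_swap[of "{1..Y}" Y "\<lambda>e k. of_bool (squarefree e) / real (totient e)"] by simp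
  also have "\<dots> = (\<Sum>e\<in>{1..Y}. real (Y div e) * (of_bool (squarefree e) / real (totient e)))"
    by (intro sum.cong refl, subst mult_in_atLeastAtMost_iff) auto
  also have "\<dots> \<le> (\<Sum>e\<in>{1..Y}. (real Y / real e) * (of_bool (squarefree e) / real (totient e)))"
    by (intro sum_mono mult_right_mono of_nat_div_le_of_nat) auto
  also have "\<dots> = real Y * (\<Sum>e\<in>{1..Y}. of_bool (squarefree e) * recip_n_totient e)"
    unfolding sum_distrib_left by (intro sum.cong refl) (simp add: recip_n_totient_def)
  also have "\<dots> = real Y * (\<Sum>e | e \<in> {1..Y} \<and> squarefree e. recip_n_totient e)"
    by (simp add: Int_def)
  also have "\<dots> \<le> real Y * 2"
    by (intro mult_left_mono sum_squarefree_recip_n_totient_le) auto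
  also have "\<dots> \<le> 2 * y"
    using assms(1) by (simp add: Y_def)
  finally show ?thesis .
qed

lemma sum_inverse_three_halves_le:
  assumes "m \<ge> 1"
  shows "(\<Sum>k\<in>{m<..M}. 1 / (real k * sqrt (real k))) \<le> 2 / sqrt (real m)"
proof (cases "m \<le> M")
  case True
  have "(\<Sum>k\<in>{m<..M}. 1 / (real k * sqrt (real k))) \<le> 2 * (1 / sqrt (real m) - 1 / sqrt (real M))"
  proof (rule sum_greaterThanAtMost_telescope_le[OF _ True])
    fix k :: nat assume "m < k"
    define s t where "s = sqrt (real k)" and "t = sqrt (real (k - 1))"
    have "t > 0" "t \<le> s"
      using \<open>m < k\<close> assms by (simp_all add: s_def t_def)
    then have "s * t * (s + t) \<le> s * s * (2 * s)"
      by (intro mult_mono mult_left_mono) simp_all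
    have "1 / (real k * sqrt (real k)) = 2 * (1 / (s * s * (2 * s)))"
      by (simp add: s_def)
    also have "\<dots> \<le> 2 * (1 / (s * t * (s + t)))"
      using \<open>s * t * (s + t) \<le> s * s * (2 * s)\<close> \<open>t > 0\<close> \<open>t \<le> s\<close>
      by (intro mult_left_mono divide_left_mono mult_pos_pos) simp_all
    also have "\<dots> = 2 * (1 / sqrt (real (k - 1)) - 1 / sqrt (real k))"
      using inverse_sqrt_diff[of k] \<open>m < k\<close> assms by (simp only: s_def t_def)
    finally show "1 / (real k * sqrt (real k)) \<le> 2 * (1 / sqrt (real (k - 1)) - 1 / sqrt (real k))" .
  qed
  also have "\<dots> \<le> 2 / sqrt (real m)"
    by simp
  finally show ?thesis .
qed simp

lemma sum_inverse_three_halves_tail: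
  fixes x :: real
  assumes "x > 0" "finite K" "\<forall>k\<in>K. real k > x"
  shows "(\<Sum>k\<in>K. 1 / (real k * sqrt (real k))) \<le> 3 / sqrt x"
proof -
  define n where "n = nat \<lfloor>x\<rfloor>"
  define M where "M = Max (insert 0 K)"
  have "real n \<le> x" "x < real n + 1"
    using assms(1) by (simp_all add: n_def)
  have "K \<subseteq> {n<..M}"
  proof
    fix k assume "k \<in> K"
    then have "real n < real k" "k \<le> M"
      using assms \<open>real n \<le> x\<close> by (auto simp: M_def)
    then show "k \<in> {n<..M}"
      by simp
  qed
  then have "(\<Sum>k\<in>K. 1 / (real k * sqrt (real k))) \<le> (\<Sum>k\<in>{n<..M}. 1 / (real k * sqrt (real k)))"
    by (intro sum_mono2) auto
  also have "\<dots> \<le> 3 / sqrt x"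
  proof (cases "n = 0")
    case False
    have "(\<Sum>k\<in>{n<..M}. 1 / (real k * sqrt (real k))) \<le> 2 / sqrt (real n)"
      using False by (intro sum_inverse_three_halves_le) simp
    also have "\<dots> \<le> 3 / sqrt x"
    proof -
      have "sqrt (4 * x) \<le> sqrt (9 * real n)"
        using \<open>x < real n + 1\<close> False by (intro real_sqrt_le_mono) linarith
      then have "2 * sqrt x \<le> 3 * sqrt (real n)"
        by (simp add: real_sqrt_mult)
      then show ?thesis
        using False assms(1) by (simp add: field_simps)
    qed
    finally show ?thesis .
  next
    case True
    have "{n<..M} \<subseteq> insert 1 {1<..M}"
      using True by auto
    then have "(\<Sum>k\<in>{n<..M}. 1 / (real k * sqrt (real k))) \<le> (\<Sum>k\<in>insert 1 {1<..M}. 1 / (real k * sqrt (real k)))"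
      by (intro sum_mono2) auto
    also have "\<dots> \<le> 1 + 2 / sqrt 1"
      using sum_inverse_three_halves_le[of 1 M] by simp
    also have "\<dots> \<le> 3 / sqrt x"
    proof -
      have "sqrt x \<le> 1"
        using True \<open>x < real n + 1\<close> by simp
      then show ?thesis
        using assms(1) by (simp add: le_divide_eq)
    qed
    finally show ?thesis .
  qed
  finally show ?thesis .
qed

lemma sum_recip_sqrt_totient_tail:
  fixes y :: real
  assumes "y > 0" "finite B" "\<forall>b\<in>B. real b > y"
  shows "(\<Sum>b\<in>B. recip_sqrt_totient b) \<le> 6 / sqrt y"
proof -
  define X where "X = Max (insert 0 B)"
  define G where "G e k = of_bool (squarefree e) / real (totient e) *
                            (1 / (real (e * k) * sqrt (real (e * k))))" for e k
  have "B \<subseteq> {1..X}"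
    using assms by (auto simp: X_def Suc_le_eq intro!: Nat.gr0I)
  have "(\<Sum>b\<in>B. recip_sqrt_totient b) = (\<Sum>b\<in>B. \<Sum>e | e dvd b. G e (b div e))"
  proof (intro sum.cong refl)
    fix b assume "b \<in> B"
    then have "b > 0"
      using \<open>B \<subseteq> {1..X}\<close> by auto
    have "recip_sqrt_totient b = real b / real (totient b) * (1 / (real b * sqrt (real b)))"
      using \<open>b > 0\<close> by (simp add: recip_sqrt_totient_def)
    also have "\<dots> = (\<Sum>e | e dvd b. G e (b div e))"
      using \<open>b > 0\<close> by (simp add: of_nat_div_totient_eq_sum_divisors sum_divide_distrib G_def)
    finally show "recip_sqrt_totient b = (\<Sum>e | e dvd b. G e (b div e))" .
  qed
  also have "\<dots> = (\<Sum>e\<in>{1..X}. \<Sum>k | e * k \<in> B. G e k)"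
    using \<open>B \<subseteq> {1..X}\<close> by (rule sum_divisors_swap)
  also have "\<dots> \<le> (\<Sum>e\<in>{1..X}. 3 / sqrt y * (of_bool (squarefree e) * recip_n_totient e))"
  proof (rule sum_mono)
    fix e assume "e \<in> {1..X}"
    then have "e > 0"
      by simp
    define c where "c = of_bool (squarefree e) / (real (totient e) * real e * sqrt (real e))"
    have "c \<ge> 0"
      by (simp add: c_def)
    have "(\<Sum>k | e * k \<in> B. G e k) = c * (\<Sum>k | e * k \<in> B. 1 / (real k * sqrt (real k)))"
      unfolding sum_distrib_left
      by (intro sum.cong refl) (simp add: G_def c_def real_sqrt_mult field_simps)
    also have "\<dots> \<le> c * (3 / sqrt (y / real e))"
    proof (rule mult_left_mono[OF sum_inverse_three_halves_tail \<open>c \<ge> 0\<close>])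
      show "finite {k. e * k \<in> B}"
        using mult_preimage_subset_atMost[OF \<open>B \<subseteq> {1..X}\<close> \<open>e > 0\<close>] by (rule finite_subset) simp
      show "y / real e > 0"
        using assms \<open>e > 0\<close> by simp
      show "\<forall>k\<in>{k. e * k \<in> B}. y / real e < real k"
        using assms \<open>e > 0\<close> by (auto simp: divide_less_eq mult.commute)
    qed
    also have "\<dots> = 3 / sqrt y * (of_bool (squarefree e) * recip_n_totient e)"
      using \<open>e > 0\<close> assms(1) by (simp add: c_def recip_n_totient_def real_sqrt_divide field_simps)
    finally show "(\<Sum>k | e * k \<in> B. G e k) \<le> 3 / sqrt y * (of_bool (squarefree e) * recip_n_totient e)" .
  qed
  also have "\<dots> = 3 / sqrt y * (\<Sum>e\<in>{1..X}. of_bool (squarefree e) * recip_n_totient e)"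
    by (simp only: sum_distrib_left)
  also have "\<dots> = 3 / sqrt y * (\<Sum>e | e \<in> {1..X} \<and> squarefree e. recip_n_totient e)"
    by (simp add: Int_def)
  also have "\<dots> \<le> 3 / sqrt y * 2"
    using assms(1) by (intro mult_left_mono sum_squarefree_recip_n_totient_le) auto
  finally show ?thesis
    by simp
qed

section \<open>The error terms\<close>

lemma harm_floor_approx:
  fixes x :: real
  assumes "x \<ge> 1"
  shows "\<bar>harm (nat \<lfloor>x\<rfloor>) - ln x - euler_mascheroni\<bar> \<le> 1 / x"
proof -
  define n where "n = nat \<lfloor>x\<rfloor>"
  have "n \<ge> 1" "real n \<le> x" "x < real n + 1"
    using assms by (simp_all add: n_def le_nat_floor)
  have bounds: "harm n - ln (real n + 1) + inverse (real (2 * (n + 1))) \<le> euler_mascheroni"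
    "euler_mascheroni \<le> harm n - ln (real n + 1) + 1 / (2 * real n)"
    using euler_mascheroni_bounds[OF \<open>n \<ge> 1\<close>] by (simp_all add: add.commute inverse_eq_divide)
  have "ln (real n + 1) - ln x = ln ((real n + 1) / x)"
    using assms by (simp add: ln_div)
  also have "\<dots> \<le> (real n + 1) / x - 1"
    using assms by (intro ln_le_minus_one) simp
  also have "\<dots> \<le> 1 / x"
    using assms \<open>real n \<le> x\<close> by (simp add: field_simps)
  finally have "ln (real n + 1) - ln x \<le> 1 / x" .
  moreover have "ln (real n + 1) - ln x \<ge> 0"
    using assms \<open>x < real n + 1\<close> by simp
  moreover have "1 / (2 * real n) \<le> 1 / x"
  proof -
    have "x \<le> 2 * real n"
      using \<open>x < real n + 1\<close> \<open>n \<ge> 1\<close> by linarith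
    then show ?thesis
      using assms by (simp add: field_simps)
  qed
  moreover have "inverse (real (2 * (n + 1))) \<ge> 0"
    by simp
  ultimately show ?thesis
    using bounds unfolding n_def[symmetric] by linarith
qed

lemma abs_euler_mascheroni_minus_ln_le:
  fixes t :: real
  assumes "t \<ge> 1"
  shows "\<bar>euler_mascheroni - ln t\<bar> \<le> 3 / 2 * sqrt (sqrt t)"
proof -
  define u where "u = sqrt (sqrt t)"
  have "u \<ge> 1"
    using assms by (simp add: u_def)
  have "u ^ 4 = (u\<^sup>2)\<^sup>2"
    by (simp flip: power_mult)
  also have "\<dots> = t"
    using assms by (simp add: u_def)
  finally have "t = u ^ 4" ..
  then have "ln t = 4 * ln u"
    using \<open>u \<ge> 1\<close> by (simp add: ln_realpow)
  text \<open>The tangent line of \<open>ln\<close> at \<open>8/3\<close>, with \<open>ln (8/3) \<le> 1.14\<close>.\<close>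
  have "ln (8 / 3 :: real) \<le> 114 / 100"
  proof -
    have "(8 / 3 :: real) \<le> 1 + 114 / 100 + (114 / 100)\<^sup>2 / 2"
      by (simp add: power2_eq_square)
    also have "\<dots> \<le> exp (114 / 100)"
      by (rule exp_lower_Taylor_quadratic) simp
    finally have "ln (8 / 3 :: real) \<le> ln (exp (114 / 100))"
      by (subst ln_le_cancel_iff) auto
    then show ?thesis
      by simp
  qed
  moreover have "ln (u / (8 / 3)) \<le> u / (8 / 3) - 1"
    using \<open>u \<ge> 1\<close> by (intro ln_le_minus_one) simp
  moreover have "ln (u / (8 / 3)) = ln u - ln (8 / 3)"
    using \<open>u \<ge> 1\<close> by (intro ln_divide_pos) auto
  ultimately have "ln t \<le> 3 / 2 * u + 56 / 100"
    using \<open>ln t = 4 * ln u\<close> by simp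
  moreover have "ln t \<ge> 0"
    using assms by simp
  ultimately show ?thesis
    using euler_mascheroni_gt_19_over_33 euler_mascheroni_less_13_over_22 \<open>u \<ge> 1\<close>
    unfolding u_def[symmetric] by (intro abs_leI) linarith+
qed

lemma fiber_sum_small_le:
  fixes z :: real
  assumes "z > 0" "a > 0" "\<forall>b\<in>B. 1 \<le> b \<and> real a * (real b)\<^sup>2 \<le> z"
  shows "recip_n_totient a * (\<Sum>b\<in>B. recip_n_totient b * (real (a * b ^ 2) / z))
           \<le> 2 / sqrt z * recip_sqrt_totient a"
proof -
  have "(\<Sum>b\<in>B. recip_n_totient b * (real (a * b ^ 2) / z)) = real a / z * (\<Sum>b\<in>B. real b / real (totient b))"
    unfolding sum_distrib_left using assms(3)
    by (intro sum.cong refl) (auto simp: recip_n_totient_def power2_eq_square)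
  also have "\<dots> \<le> real a / z * (2 * sqrt (z / real a))"
  proof (intro mult_left_mono sum_of_nat_div_totient_le ballI conjI)
    fix b assume "b \<in> B"
    then show "1 \<le> b" "real b \<le> sqrt (z / real a)"
      using assms by (simp_all add: real_le_rsqrt field_simps)
  qed (use assms in auto)
  finally have "recip_n_totient a * (\<Sum>b\<in>B. recip_n_totient b * (real (a * b ^ 2) / z)) \<le>
                recip_n_totient a * (real a / z * (2 * sqrt (z / real a)))"
    by (rule mult_left_mono) (rule recip_n_totient_nonneg)
  also have "\<dots> = 2 / sqrt z * recip_sqrt_totient a"
  proof -
    have "sqrt z * sqrt z = z" "sqrt (real a) * sqrt (real a) = real a"
      using assms by simp_all
    then show ?thesis
      using assms by (simp add: recip_n_totient_def recip_sqrt_totient_def real_sqrt_divide field_simps)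
  qed
  finally show ?thesis .
qed

lemma fiber_sum_large_le:
  fixes z :: real
  assumes "z > 0" "a > 0" "finite B" "\<forall>b\<in>B. z < real a * (real b)\<^sup>2"
  shows "recip_n_totient a * (\<Sum>b\<in>B. recip_n_totient b * (3 / 2 * sqrt (sqrt (real (a * b ^ 2) / z))))
           \<le> 9 / sqrt z * recip_sqrt_totient a"
proof -
  define q r where "q = sqrt (sqrt (real a))" and "r = sqrt (sqrt z)"
  have "q > 0" "r > 0" "q * q = sqrt (real a)" "r * r = sqrt z"
    using assms by (simp_all add: q_def r_def)
  have "(\<Sum>b\<in>B. recip_n_totient b * (3 / 2 * sqrt (sqrt (real (a * b ^ 2) / z)))) =
        3 / 2 * (q / r) * (\<Sum>b\<in>B. recip_sqrt_totient b)"
    unfolding sum_distrib_left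
  proof (intro sum.cong refl)
    fix b assume "b \<in> B"
    then have "real b > 0"
      using assms by (cases "b = 0") auto
    have root: "sqrt (sqrt (real (a * b ^ 2) / z)) = q / r * sqrt (real b)"
      using \<open>real b > 0\<close> assms by (simp add: q_def r_def real_sqrt_mult real_sqrt_divide)
    have "sqrt (real b) * sqrt (real b) = real b" "totient b > 0"
      using \<open>real b > 0\<close> by simp_all
    then show "recip_n_totient b * (3 / 2 * sqrt (sqrt (real (a * b ^ 2) / z))) =
               3 / 2 * (q / r) * recip_sqrt_totient b"
      unfolding root using \<open>r > 0\<close> \<open>real b > 0\<close>
      by (simp add: recip_n_totient_def recip_sqrt_totient_def field_simps)
  qed
  also have "\<dots> \<le> 3 / 2 * (q / r) * (6 / sqrt (sqrt (z / real a)))"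
  proof (intro mult_left_mono sum_recip_sqrt_totient_tail ballI)
    show "sqrt (z / real a) > 0"
      using assms by simp
    fix b assume "b \<in> B"
    then have "z / real a < (real b)\<^sup>2"
      using assms by (simp add: field_simps)
    then show "sqrt (z / real a) < real b"
      using real_sqrt_less_mono by fastforce
  qed (use \<open>q > 0\<close> \<open>r > 0\<close> assms in simp_all)
  also have "\<dots> = 9 * (q * q) / (r * r)"
    using \<open>q > 0\<close> \<open>r > 0\<close> assms by (simp add: q_def r_def real_sqrt_divide field_simps)
  finally have "recip_n_totient a * (\<Sum>b\<in>B. recip_n_totient b * (3 / 2 * sqrt (sqrt (real (a * b ^ 2) / z)))) \<le>
                recip_n_totient a * (9 * (q * q) / (r * r))"
    by (rule mult_left_mono) (rule recip_n_totient_nonneg)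
  also have "\<dots> = 9 / sqrt z * recip_sqrt_totient a"
  proof -
    have "sqrt (real a) * sqrt (real a) = real a"
      by simp
    then show ?thesis
      unfolding \<open>q * q = sqrt (real a)\<close> \<open>r * r = sqrt z\<close> using assms
      by (simp add: recip_n_totient_def recip_sqrt_totient_def field_simps)
  qed
  finally show ?thesis .
qed

lemma sum_abs_sqf_kernel_small_le:
  fixes z :: real
  assumes "z \<ge> 1"
  shows "(\<Sum>d\<in>{1..nat \<lfloor>z\<rfloor>}. \<bar>sqf_kernel d\<bar> * (real d / z)) \<le> 10 / sqrt z"
proof -
  define Z where "Z = nat \<lfloor>z\<rfloor>"
  have "real Z \<le> z"
    using assms by (simp add: Z_def)
  have "(\<Sum>d\<in>{1..Z}. \<bar>sqf_kernel d\<bar> * (real d / z)) \<le>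
        (\<Sum>a | a \<in> {1..Z} \<and> squarefree a. recip_n_totient a *
           (\<Sum>b | b \<in> {1..Z} \<and> a * b ^ 2 \<in> {1..Z}. recip_n_totient b * (real (a * b ^ 2) / z)))"
    using assms by (intro sum_abs_sqf_kernel_le) auto
  also have "\<dots> \<le> (\<Sum>a | a \<in> {1..Z} \<and> squarefree a. 2 / sqrt z * recip_sqrt_totient a)"
  proof (intro sum_mono fiber_sum_small_le ballI conjI)
    fix a b assume "a \<in> {a. a \<in> {1..Z} \<and> squarefree a}" "b \<in> {b. b \<in> {1..Z} \<and> a * b ^ 2 \<in> {1..Z}}"
    then show "1 \<le> b" "real a * (real b)\<^sup>2 \<le> z"
      using \<open>real Z \<le> z\<close> by (auto simp flip: of_nat_power of_nat_mult)
  qed (use assms in auto)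
  also have "\<dots> = 2 / sqrt z * (\<Sum>a | a \<in> {1..Z} \<and> squarefree a. recip_sqrt_totient a)"
    by (simp only: sum_distrib_left)
  also have "\<dots> \<le> 2 / sqrt z * 5"
    using assms by (intro mult_left_mono sum_squarefree_recip_sqrt_totient_le) auto
  finally show ?thesis
    by (simp add: Z_def)
qed

lemma sum_abs_sqf_kernel_large_le:
  fixes z :: real
  assumes "z \<ge> 1" "finite D" "\<forall>d\<in>D. real d > z"
  shows "(\<Sum>d\<in>D. \<bar>sqf_kernel d\<bar> * \<bar>ln z + euler_mascheroni - ln (real d)\<bar>) \<le> 45 / sqrt z"
proof -
  define X where "X = Max (insert 0 D)"
  have "D \<subseteq> {1..X}"
    using assms by (auto simp: X_def Suc_le_eq intro!: Nat.gr0I)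
  have "(\<Sum>d\<in>D. \<bar>sqf_kernel d\<bar> * \<bar>ln z + euler_mascheroni - ln (real d)\<bar>) \<le>
        (\<Sum>d\<in>D. \<bar>sqf_kernel d\<bar> * (3 / 2 * sqrt (sqrt (real d / z))))"
  proof (intro sum_mono mult_left_mono)
    fix d assume "d \<in> D"
    then have "real d / z \<ge> 1" "real d > 0"
      using assms by auto
    then have "\<bar>ln z + euler_mascheroni - ln (real d)\<bar> = \<bar>euler_mascheroni - ln (real d / z)\<bar>"
      using assms by (simp add: ln_div)
    also have "\<dots> \<le> 3 / 2 * sqrt (sqrt (real d / z))"
      using \<open>real d / z \<ge> 1\<close> by (rule abs_euler_mascheroni_minus_ln_le)
    finally show "\<bar>ln z + euler_mascheroni - ln (real d)\<bar> \<le> 3 / 2 * sqrt (sqrt (real d / z))" .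
  qed simp
  also have "\<dots> \<le> (\<Sum>a | a \<in> {1..X} \<and> squarefree a. recip_n_totient a *
                     (\<Sum>b | b \<in> {1..X} \<and> a * b ^ 2 \<in> D.
                        recip_n_totient b * (3 / 2 * sqrt (sqrt (real (a * b ^ 2) / z)))))"
    using \<open>D \<subseteq> {1..X}\<close> assms(1) by (intro sum_abs_sqf_kernel_le) simp_all
  also have "\<dots> \<le> (\<Sum>a | a \<in> {1..X} \<and> squarefree a. 9 / sqrt z * recip_sqrt_totient a)"
  proof (intro sum_mono fiber_sum_large_le ballI)
    fix a b assume "b \<in> {b. b \<in> {1..X} \<and> a * b ^ 2 \<in> D}"
    then show "z < real a * (real b)\<^sup>2"
      using assms(3) by (auto simp flip: of_nat_power of_nat_mult)
  qed (use assms in auto)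
  also have "\<dots> = 9 / sqrt z * (\<Sum>a | a \<in> {1..X} \<and> squarefree a. recip_sqrt_totient a)"
    by (simp only: sum_distrib_left)
  also have "\<dots> \<le> 9 / sqrt z * 5"
    using assms by (intro mult_left_mono sum_squarefree_recip_sqrt_totient_le) auto
  finally show ?thesis
    by simp
qed

lemma harm_floor_div_approx:
  fixes z :: real
  assumes "z \<ge> 1" "d \<in> {1..nat \<lfloor>z\<rfloor>}"
  shows "\<bar>harm (nat \<lfloor>z\<rfloor> div d) - ln (z / real d) - euler_mascheroni\<bar> \<le> real d / z"
proof -
  have "real d > 0"
    using assms by auto
  have "real d \<le> real (nat \<lfloor>z\<rfloor>)"
    using assms by auto
  also have "real (nat \<lfloor>z\<rfloor>) \<le> z"
    using assms(1) by simp
  finally have "real d \<le> z" .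
  have "nat \<lfloor>z\<rfloor> div d = nat \<lfloor>z / real d\<rfloor>"
    using assms(1) floor_divide_real_eq_div[of "int d" z] by (simp add: nat_div_distrib)
  then show ?thesis
    using harm_floor_approx[of "z / real d"] \<open>real d \<le> z\<close> \<open>real d > 0\<close> by simp
qed

lemma S1_eq_sum_divisors_square_prod:
  assumes "nat \<lfloor>z\<rfloor> \<le> N"
  shows "S1 z = (\<Sum>d | d dvd (\<Prod>p | prime p \<and> p \<le> N. p ^ 2) \<and> d \<le> nat \<lfloor>z\<rfloor>.
                   sqf_kernel d * harm (nat \<lfloor>z\<rfloor> div d))"
proof -
  define Z where "Z = nat \<lfloor>z\<rfloor>"
  define Q where "Q = (\<Prod>p | prime p \<and> p \<le> N. p ^ 2)"
  have "Q > 0"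
    by (auto simp: Q_def prime_gt_0_nat intro!: prod_pos)
  have "S1 z = (\<Sum>d\<in>{1..Z}. sqf_kernel d * harm (Z div d))"
    unfolding Z_def by (rule S1_eq_sum_sqf_kernel_harm)
  also have "\<dots> = (\<Sum>d | d dvd Q \<and> d \<le> Z. sqf_kernel d * harm (Z div d))"
  proof (rule sum.mono_neutral_right)
    show "{d. d dvd Q \<and> d \<le> Z} \<subseteq> {1..Z}"
      using \<open>Q > 0\<close> by (auto intro: Nat.gr0I simp: Suc_le_eq)
    show "\<forall>d\<in>{1..Z} - {d. d dvd Q \<and> d \<le> Z}. sqf_kernel d * harm (Z div d) = 0"
      using assms sqf_kernel_nonzero_dvd_square_prod[of _ N] by (force simp: Q_def Z_def)
  qed simp
  finally show ?thesis
    by (simp add: Z_def Q_def)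
qed

lemma sum_divisors_sqf_kernel_affine_ln:
  assumes "finite P" "\<forall>p\<in>P. prime p"
  shows "(\<Sum>d | d dvd (\<Prod>p\<in>P. p ^ 2). sqf_kernel d * (L - ln (real d)))
           = L + (\<Sum>p\<in>P. ln (real p) / (real p * (real p - 1)))"
proof -
  have "(\<Sum>d | d dvd (\<Prod>p\<in>P. p ^ 2). sqf_kernel d * (L - ln (real d))) =
        L * (\<Sum>d | d dvd (\<Prod>p\<in>P. p ^ 2). sqf_kernel d)
          - (\<Sum>d | d dvd (\<Prod>p\<in>P. p ^ 2). sqf_kernel d * ln (real d))"
    by (simp add: algebra_simps sum_subtractf sum_distrib_left)
  then show ?thesis
    using sqf_kernel_sums_divisors_square_prod[OF assms] by simp
qed

lemma sum_abs_sqf_kernel_harm_error_le: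
  fixes z :: real
  assumes "z \<ge> 1" "D \<subseteq> {1..nat \<lfloor>z\<rfloor>}"
  shows "(\<Sum>d\<in>D. \<bar>sqf_kernel d\<bar> * \<bar>harm (nat \<lfloor>z\<rfloor> div d) - ln (z / real d) - euler_mascheroni\<bar>)
           \<le> 10 / sqrt z"
proof -
  have "(\<Sum>d\<in>D. \<bar>sqf_kernel d\<bar> * \<bar>harm (nat \<lfloor>z\<rfloor> div d) - ln (z / real d) - euler_mascheroni\<bar>)
          \<le> (\<Sum>d\<in>D. \<bar>sqf_kernel d\<bar> * (real d / z))"
    using assms harm_floor_div_approx by (intro sum_mono mult_left_mono) auto
  also have "\<dots> \<le> (\<Sum>d\<in>{1..nat \<lfloor>z\<rfloor>}. \<bar>sqf_kernel d\<bar> * (real d / z))"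
    using assms by (intro sum_mono2) auto
  also have "\<dots> \<le> 10 / sqrt z"
    using assms(1) by (rule sum_abs_sqf_kernel_small_le)
  finally show ?thesis .
qed

lemma S1_approx_finite_prime_sum:
  fixes z :: real
  assumes "z \<ge> 1" "nat \<lfloor>z\<rfloor> \<le> N"
  shows "\<bar>S1 z - ln z - euler_mascheroni - (\<Sum>p | prime p \<and> p \<le> N. ln (real p) / (real p * (real p - 1)))\<bar>
           \<le> 55 / sqrt z"
proof -
  define Z where "Z = nat \<lfloor>z\<rfloor>"
  define P where "P = {p. prime p \<and> p \<le> N}"
  define Q where "Q = (\<Prod>p\<in>P. p ^ 2)"
  define C where "C = (\<Sum>p\<in>P. ln (real p) / (real p * (real p - 1)))"
  define L where "L = ln z + euler_mascheroni"
  define E where "E d = harm (Z div d) - ln (z / real d) - euler_mascheroni" for d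
  define small where "small = {d. d dvd Q \<and> d \<le> Z}"
  define large where "large = {d. d dvd Q \<and> Z < d}"
  have "finite P" "\<forall>p\<in>P. prime p"
    using finite_primes_le by (auto simp: P_def)
  then have "Q > 0"
    by (auto simp: Q_def prime_gt_0_nat intro!: prod_pos)
  then have fin: "finite small" "finite large" and "small \<subseteq> {1..Z}"
    by (auto simp: small_def large_def Suc_le_eq intro: Nat.gr0I)
  have "{d. d dvd Q} = small \<union> large" "small \<inter> large = {}"
    by (auto simp: small_def large_def)
  then have total: "(\<Sum>d\<in>small. sqf_kernel d * (L - ln (real d))) + (\<Sum>d\<in>large. sqf_kernel d * (L - ln (real d)))
                      = L + C"
    using fin sum_divisors_sqf_kernel_affine_ln[OF \<open>finite P\<close> \<open>\<forall>p\<in>P. prime p\<close>]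
    by (simp add: sum.union_disjoint[symmetric] Q_def C_def)
  have "S1 z = (\<Sum>d\<in>small. sqf_kernel d * harm (Z div d))"
    using S1_eq_sum_divisors_square_prod[OF assms(2)] by (simp add: small_def Z_def Q_def P_def)
  also have "\<dots> = (\<Sum>d\<in>small. sqf_kernel d * (L - ln (real d))) + (\<Sum>d\<in>small. sqf_kernel d * E d)"
  proof (subst sum.distrib[symmetric], intro sum.cong refl)
    fix d assume "d \<in> small"
    then have ln_eq: "ln (z / real d) = ln z - ln (real d)"
      using \<open>small \<subseteq> {1..Z}\<close> assms(1) by (intro ln_divide_pos) auto
    show "sqf_kernel d * harm (Z div d) = sqf_kernel d * (L - ln (real d)) + sqf_kernel d * E d"
      unfolding E_def L_def ln_eq by (simp add: algebra_simps)
  qed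
  finally have "S1 z - L - C = (\<Sum>d\<in>small. sqf_kernel d * E d) - (\<Sum>d\<in>large. sqf_kernel d * (L - ln (real d)))"
    using total by linarith
  then have "\<bar>S1 z - L - C\<bar> \<le> \<bar>\<Sum>d\<in>small. sqf_kernel d * E d\<bar> +
                             \<bar>\<Sum>d\<in>large. sqf_kernel d * (L - ln (real d))\<bar>"
    by (simp add: abs_triangle_ineq4)
  also have "\<dots> \<le> (\<Sum>d\<in>small. \<bar>sqf_kernel d\<bar> * \<bar>E d\<bar>) +
                  (\<Sum>d\<in>large. \<bar>sqf_kernel d\<bar> * \<bar>ln z + euler_mascheroni - ln (real d)\<bar>)"
    by (intro add_mono order.trans[OF sum_abs]) (simp_all add: abs_mult L_def)
  also have "\<dots> \<le> 10 / sqrt z + 45 / sqrt z"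
  proof (rule add_mono)
    show "(\<Sum>d\<in>small. \<bar>sqf_kernel d\<bar> * \<bar>E d\<bar>) \<le> 10 / sqrt z"
      unfolding E_def Z_def using assms(1) \<open>small \<subseteq> {1..Z}\<close>[unfolded Z_def]
      by (rule sum_abs_sqf_kernel_harm_error_le)
    have "z < real Z + 1"
      using assms(1) by (simp add: Z_def)
    then have "\<forall>d\<in>large. real d > z"
      by (auto simp: large_def)
    then show "(\<Sum>d\<in>large. \<bar>sqf_kernel d\<bar> * \<bar>ln z + euler_mascheroni - ln (real d)\<bar>) \<le> 45 / sqrt z"
      using assms(1) fin(2) by (intro sum_abs_sqf_kernel_large_le)
  qed
  finally show ?thesis
    by (simp add: L_def C_def P_def)
qed

lemma summable_inverse_three_halves: "summable (\<lambda>n. 1 / (real n * sqrt (real n)))"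
proof (rule summableI_nonneg_bounded)
  fix N
  have "(\<Sum>n<N. 1 / (real n * sqrt (real n))) \<le> (\<Sum>n\<in>{..1} \<union> {1<..N}. 1 / (real n * sqrt (real n)))"
    by (intro sum_mono2) auto
  also have "\<dots> = 1 + (\<Sum>n\<in>{1<..N}. 1 / (real n * sqrt (real n)))"
    by (subst sum.union_disjoint) auto
  also have "\<dots> \<le> 1 + 2 / sqrt 1"
    using sum_inverse_three_halves_le[of 1 N] by simp
  finally show "(\<Sum>n<N. 1 / (real n * sqrt (real n))) \<le> 3"
    by simp
qed simp

lemma prime_log_term_le:
  "\<bar>if prime n then ln (real n) / (real n * (real n - 1)) else 0\<bar> \<le> 4 * (1 / (real n * sqrt (real n)))"
proof (cases "prime n")
  case True
  then have "real n \<ge> 2"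
    using prime_ge_2_nat by fastforce
  have "ln (real n) = 2 * ln (sqrt (real n))"
    using \<open>real n \<ge> 2\<close> by (simp add: ln_sqrt)
  also have "\<dots> \<le> 2 * sqrt (real n)"
    using \<open>real n \<ge> 2\<close> ln_le_minus_one[of "sqrt (real n)"] by simp
  finally have "ln (real n) \<le> 2 * sqrt (real n)" .
  moreover have "real n / 2 \<le> real n - 1" "ln (real n) \<ge> 0"
    using \<open>real n \<ge> 2\<close> by simp_all
  ultimately have "ln (real n) / (real n * (real n - 1)) \<le> 2 * sqrt (real n) / (real n * (real n / 2))"
    using \<open>real n \<ge> 2\<close> by (intro frac_le mult_left_mono) simp_all
  also have "\<dots> = 4 * (1 / (real n * sqrt (real n)))"
  proof -
    have "sqrt (real n) * sqrt (real n) = real n"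
      by simp
    then show ?thesis
      using \<open>real n \<ge> 2\<close> by (simp add: field_simps)
  qed
  finally show ?thesis
    using True \<open>ln (real n) \<ge> 0\<close> \<open>real n \<ge> 2\<close> by simp
qed simp

lemma summable_prime_log_terms:
  "summable (\<lambda>p. if prime p then ln (real p) / (real p * (real p - 1)) else 0)"
proof (rule summable_comparison_test')
  show "summable (\<lambda>n. 4 * (1 / (real n * sqrt (real n))))"
    using summable_inverse_three_halves by (rule summable_mult)
  show "norm (if prime n then ln (real n) / (real n * (real n - 1)) else 0)
          \<le> 4 * (1 / (real n * sqrt (real n)))" for n
    using prime_log_term_le[of n] by simp
qed

lemma sum_lessThan_Suc_prime_terms:
  "(\<Sum>n<Suc N. if prime n then g n else 0) = (\<Sum>p | prime p \<and> p \<le> N. g p)"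
proof -
  have "(\<Sum>p | prime p \<and> p \<le> N. g p) = (\<Sum>p | p \<in> {..<Suc N} \<and> prime p. g p)"
    by (intro sum.cong refl) auto
  also have "\<dots> = (\<Sum>n<Suc N. if prime n then g n else 0)"
    by (rule sum.inter_filter) simp
  finally show ?thesis ..
qed

theorem lemma4p5:
  fixes z :: real
  assumes "z \<ge> 10^9"
  shows "\<bar>S1 z - ln z - euler_mascheroni
            - (\<Sum>p. if prime p then ln (real p) / (real p * (real p - 1)) else 0)\<bar> \<le> 58 / sqrt z"
proof -
  define f where "f p = (if prime p then ln (real p) / (real p * (real p - 1)) else 0)" for p
  define S0 where "S0 = S1 z - ln z - euler_mascheroni"
  have "z \<ge> 1"
    using assms by simp
  have "(\<lambda>N. \<Sum>n<Suc N. f n) \<longlonglongrightarrow> suminf f"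
    using summable_prime_log_terms summable_LIMSEQ LIMSEQ_Suc unfolding f_def by blast
  then have "(\<lambda>N. \<bar>S0 - (\<Sum>n<Suc N. f n)\<bar>) \<longlonglongrightarrow> \<bar>S0 - suminf f\<bar>"
    by (intro tendsto_intros)
  moreover have "\<exists>M. \<forall>N\<ge>M. \<bar>S0 - (\<Sum>n<Suc N. f n)\<bar> \<le> 55 / sqrt z"
    unfolding S0_def f_def sum_lessThan_Suc_prime_terms
    using S1_approx_finite_prime_sum[OF \<open>z \<ge> 1\<close>] by blast
  ultimately have "\<bar>S0 - suminf f\<bar> \<le> 55 / sqrt z"
    by (rule LIMSEQ_le_const2)
  also have "\<dots> \<le> 58 / sqrt z"
    using \<open>z \<ge> 1\<close> by (intro divide_right_mono) auto
  finally show ?thesis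
    by (simp add: S0_def f_def[abs_def])
qed

end
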